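(* Consider the operator splitting scheme described in the context for the reaction-diffusion system with one reversible reaction. Given $c^n$ with $c^n_{i,j,k}\in\mathbb{R}^N_+$ (all components positive) for all $0\le i,j,k\le N_0-1$, with periodic boundary conditions, the scheme has a unique solution $c^{n+1}$, and $c^{n+1}_{i,j,k}\in\mathbb{R}^N_+$ for all $0\le i,j,k\le N_0-1$. Moreover $\mathcal{F}_h(c^{n+1})\le\mathcal{F}_h(c^n)$, and hence $\mathcal{F}_h(c^n)\le\mathcal{F}_h(c^0)$ for all $n$.
   Context: Species $X_1,\dots,X_N$ undergo one reaction with stoichiometric vector $\sigma=(-\alpha_1,\dots,-\alpha_r,\beta_{r+1},\dots,\beta_N)^{\rm T}$, $1\le r<N$, $\alpha_i,\beta_i>0$; $U_1,\dots,U_N\in\mathbb{R}$, $k_1^->0$. Periodic grid on $(0,1)^3$, $h=1/N_0$, $\langle f,g\rangle=h^3\sum_{i,j,k}f_{i,j,k}g_{i,j,k}$, and $\mathcal{F}_h(c)=\langle\sum_{i=1}^N(c_i(\ln c_i-1)+c_iU_i),\mathbf 1\rangle$. Reaction scheme with step $\tau$ at a single grid point, starting from $c^0>0$: with $c(R)=c^0+\sigma R$, $F(R)=\sum_i[c_i(R)(\ln c_i(R)-1)+c_i(R)U_i]$, $\mu_i(R)=\ln c_i(R)+U_i$, $\eta(c)=k_1^-\prod_{i>r}c_i^{\beta_i}$, $\phi(p,q)=\frac{F(p)-F(q)}{p-q}$ ($p\ne q$), $\phi(p,p)=F'(p)$: first compute the predictor $\widehat R$ with $c(\widehat R)>0$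 solving $\ln\big(\frac{\widehat R}{\eta(c^0)\tau}+1\big)=-\sum_i\sigma_i\mu_i(\widehat R)$; with $\hat\eta=\eta(c(\widehat R/2))$, find $R$ with $c(R)>0$, $R+\hat\eta\tau>0$ and $\ln\big(\frac{R}{\hat\eta\tau}+1\big)=-\phi(R,0)-\tau\sum_i\sigma_i(\mu_i(R)-\mu_i(0))$; output $c^0+\sigma R$. Diffusion schemes with step $\tau$ for each species separately ($\partial_t c_i=\nabla\cdot(D_i(c_i)\nabla c_i)$, $D_i>0$): if $D_i$ is a constant, $c_i\mapsto e^{D_i\tau\Delta_h}c_i$ with $\Delta_h$ the periodic 7-point discrete Laplacian; otherwise, from $\rho^n=c_i$, compute the positive solution $\hat\rho$ of $\frac{\hat\rho-\rho^n}{\tau}=\nabla_h\cdot(\mathcal{A}_h[D_i(\rho^n)]\nabla_h\hat\rho)$, set $\hat\rho^{1/2}=\frac12(\rho^n+\hat\rho)$, $\mathcal{M}=\mathcal{A}_h(D_i(\hat\rho^{1/2})\hat\rho^{1/2})$, and find positive $\rho^{n+1}$ with $\frac{\rho^{n+1}-\rho^n}{\tau}=\nabla_h\cdot(\mathcal{M}\nabla_h\mu)$, $\mu=Q(\rho^{n+1},\rho^n)+\tau(\ln\rho^{n+1}-\ln\rho^n)$, where $Q(p,q)=\frac{F_i(p)-F_i(q)}{p-q}$ ($p\neq q$), $Q(p,p)=F_i'(p)$, $F_i(\rho)=\rho(\ln\rho-1)+U_i\rho$; here $\nabla_h$ is the forward difference to staggered points, $\nabla_h\cdot$ the backward-difference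 divergence, $\mathcal{A}_h$ the two-point average to staggered points. Splitting step ($\Delta t>0$): Stage 1: apply the reaction scheme with $\tau=\Delta t/2$ at every grid point to $c^n$, giving $c^{n+1,(1)}$. Stage 2: apply the diffusion scheme with $\tau=\Delta t$ to each species of $c^{n+1,(1)}$, giving $c^{n+1,(2)}$. Stage 3: apply the reaction scheme with $\tau=\Delta t/2$ at every grid point to $c^{n+1,(2)}$, giving $c^{n+1}$. *)

theory Defs
  imports "HOL-Analysis.Analysis"
begin

type_synonym gpt = "nat \<times> nat \<times> nat"

section \<open>Reaction part (single grid point); species are indexed 1..N\<close>

definition sig :: "nat \<Rightarrow> (nat \<Rightarrow> real) \<Rightarrow> (nat \<Rightarrow> real) \<Rightarrow> nat \<Rightarrow> real" where
  "sig r \<alpha> \<beta> i = (if i \<le> r then - \<alpha> i else \<beta> i)"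

definition cR :: "nat \<Rightarrow> (nat \<Rightarrow> real) \<Rightarrow> (nat \<Rightarrow> real) \<Rightarrow> (nat \<Rightarrow> real) \<Rightarrow> real \<Rightarrow> nat \<Rightarrow> real" where
  "cR r \<alpha> \<beta> c0 R i = c0 i + sig r \<alpha> \<beta> i * R"

definition FR :: "nat \<Rightarrow> nat \<Rightarrow> (nat \<Rightarrow> real) \<Rightarrow> (nat \<Rightarrow> real) \<Rightarrow> (nat \<Rightarrow> real)
    \<Rightarrow> (nat \<Rightarrow> real) \<Rightarrow> real \<Rightarrow> real" where
  "FR N r \<alpha> \<beta> U c0 R =
     (\<Sum>i=1..N. cR r \<alpha> \<beta> c0 R i * (ln (cR r \<alpha> \<beta> c0 R i) - 1) + cR r \<alpha> \<beta> c0 R i * U i)"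

definition muR :: "nat \<Rightarrow> (nat \<Rightarrow> real) \<Rightarrow> (nat \<Rightarrow> real) \<Rightarrow> (nat \<Rightarrow> real)
    \<Rightarrow> (nat \<Rightarrow> real) \<Rightarrow> real \<Rightarrow> nat \<Rightarrow> real" where
  "muR r \<alpha> \<beta> U c0 R i = ln (cR r \<alpha> \<beta> c0 R i) + U i"

definition eta :: "nat \<Rightarrow> nat \<Rightarrow> (nat \<Rightarrow> real) \<Rightarrow> real \<Rightarrow> (nat \<Rightarrow> real) \<Rightarrow> real" where
  "eta N r \<beta> k1m c = k1m * (\<Prod>i\<in>{r+1..N}. c i powr \<beta> i)"

definition phiR :: "nat \<Rightarrow> nat \<Rightarrow> (nat \<Rightarrow> real) \<Rightarrow> (nat \<Rightarrow> real) \<Rightarrow> (nat \<Rightarrow> real)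
    \<Rightarrow> (nat \<Rightarrow> real) \<Rightarrow> real \<Rightarrow> real \<Rightarrow> real" where
  "phiR N r \<alpha> \<beta> U c0 p q =
     (if p \<noteq> q then (FR N r \<alpha> \<beta> U c0 p - FR N r \<alpha> \<beta> U c0 q) / (p - q)
      else deriv (FR N r \<alpha> \<beta> U c0) p)"

definition posR :: "nat \<Rightarrow> nat \<Rightarrow> (nat \<Rightarrow> real) \<Rightarrow> (nat \<Rightarrow> real) \<Rightarrow> (nat \<Rightarrow> real) \<Rightarrow> real \<Rightarrow> bool" where
  "posR N r \<alpha> \<beta> c0 R \<longleftrightarrow> (\<forall>i\<in>{1..N}. cR r \<alpha> \<beta> c0 R i > 0)"

definition predictor :: "nat \<Rightarrow> nat \<Rightarrow> (nat \<Rightarrow> real) \<Rightarrow> (nat \<Rightarrow> real) \<Rightarrow> (nat \<Rightarrow> real) \<Rightarrow> real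
    \<Rightarrow> real \<Rightarrow> (nat \<Rightarrow> real) \<Rightarrow> real \<Rightarrow> bool" where
  "predictor N r \<alpha> \<beta> U k1m \<tau> c0 Rh \<longleftrightarrow>
     posR N r \<alpha> \<beta> c0 Rh \<and>
     Rh / (eta N r \<beta> k1m c0 * \<tau>) + 1 > 0 \<and>
     ln (Rh / (eta N r \<beta> k1m c0 * \<tau>) + 1) =
       - (\<Sum>i=1..N. sig r \<alpha> \<beta> i * muR r \<alpha> \<beta> U c0 Rh i)"

definition corrector :: "nat \<Rightarrow> nat \<Rightarrow> (nat \<Rightarrow> real) \<Rightarrow> (nat \<Rightarrow> real) \<Rightarrow> (nat \<Rightarrow> real) \<Rightarrow> real
    \<Rightarrow> real \<Rightarrow> (nat \<Rightarrow> real) \<Rightarrow> real \<Rightarrow> real \<Rightarrow> bool" where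
  "corrector N r \<alpha> \<beta> U k1m \<tau> c0 Rh R \<longleftrightarrow>
     (let et = eta N r \<beta> k1m (cR r \<alpha> \<beta> c0 (Rh / 2)) in
       posR N r \<alpha> \<beta> c0 R \<and> R + et * \<tau> > 0 \<and>
       ln (R / (et * \<tau>) + 1) =
         - phiR N r \<alpha> \<beta> U c0 R 0
         - \<tau> * (\<Sum>i=1..N. sig r \<alpha> \<beta> i * (muR r \<alpha> \<beta> U c0 R i - muR r \<alpha> \<beta> U c0 0 i)))"

definition reaction_step :: "nat \<Rightarrow> nat \<Rightarrow> (nat \<Rightarrow> real) \<Rightarrow> (nat \<Rightarrow> real) \<Rightarrow> (nat \<Rightarrow> real) \<Rightarrow> real
    \<Rightarrow> real \<Rightarrow> (nat \<Rightarrow> real) \<Rightarrow> (nat \<Rightarrow> real) \<Rightarrow> bool" where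
  "reaction_step N r \<alpha> \<beta> U k1m \<tau> c0 c1 \<longleftrightarrow>
     (\<exists>Rh R. predictor N r \<alpha> \<beta> U k1m \<tau> c0 Rh \<and> corrector N r \<alpha> \<beta> U k1m \<tau> c0 Rh R \<and>
            (\<forall>i\<in>{1..N}. c1 i = c0 i + sig r \<alpha> \<beta> i * R))"

definition grid :: "nat \<Rightarrow> gpt set" where
  "grid N0 = {0..<N0} \<times> {0..<N0} \<times> {0..<N0}"

definition shp :: "nat \<Rightarrow> nat \<Rightarrow> gpt \<Rightarrow> gpt" where
  "shp N0 d p = (case p of (i, j, k) \<Rightarrow>
     if d = 0 then ((i + 1) mod N0, j, k)
     else if d = 1 then (i, (j + 1) mod N0, k)
     else (i, j, (k + 1) mod N0))"

definition shm :: "nat \<Rightarrow> nat \<Rightarrow> gpt \<Rightarrow> gpt" where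
  "shm N0 d p = (case p of (i, j, k) \<Rightarrow>
     if d = 0 then ((i + N0 - 1) mod N0, j, k)
     else if d = 1 then (i, (j + N0 - 1) mod N0, k)
     else (i, j, (k + N0 - 1) mod N0))"

text \<open>Two-point average to the staggered point p + e_d/2 (stored at index (d,p)).\<close>
definition avgh :: "nat \<Rightarrow> (gpt \<Rightarrow> real) \<Rightarrow> nat \<Rightarrow> gpt \<Rightarrow> real" where
  "avgh N0 w d p = (w p + w (shp N0 d p)) / 2"

definition gradh :: "nat \<Rightarrow> (gpt \<Rightarrow> real) \<Rightarrow> nat \<Rightarrow> gpt \<Rightarrow> real" where
  "gradh N0 u d p = (u (shp N0 d p) - u p) / (1 / real N0)"

definition divh :: "nat \<Rightarrow> (nat \<Rightarrow> gpt \<Rightarrow> real) \<Rightarrow> gpt \<Rightarrow> real" where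
  "divh N0 W p = (\<Sum>d<3. (W d p - W d (shm N0 d p)) / (1 / real N0))"

definition divMgrad :: "nat \<Rightarrow> (nat \<Rightarrow> gpt \<Rightarrow> real) \<Rightarrow> (gpt \<Rightarrow> real) \<Rightarrow> gpt \<Rightarrow> real" where
  "divMgrad N0 M u = divh N0 (\<lambda>d q. M d q * gradh N0 u d q)"

definition laph :: "nat \<Rightarrow> (gpt \<Rightarrow> real) \<Rightarrow> gpt \<Rightarrow> real" where
  "laph N0 u = divMgrad N0 (\<lambda>d q. 1) u"

definition heat_exp :: "nat \<Rightarrow> real \<Rightarrow> (gpt \<Rightarrow> real) \<Rightarrow> gpt \<Rightarrow> real" where
  "heat_exp N0 t u p = (\<Sum>m. t ^ m / fact m * ((laph N0 ^^ m) u) p)"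

definition Fi :: "real \<Rightarrow> real \<Rightarrow> real" where
  "Fi Ui \<rho> = \<rho> * (ln \<rho> - 1) + Ui * \<rho>"

definition Qi :: "real \<Rightarrow> real \<Rightarrow> real \<Rightarrow> real" where
  "Qi Ui p q = (if p \<noteq> q then (Fi Ui p - Fi Ui q) / (p - q) else deriv (Fi Ui) p)"

definition diff_const :: "(real \<Rightarrow> real) \<Rightarrow> bool" where
  "diff_const Di \<longleftrightarrow> (\<exists>d. \<forall>\<rho>>0. Di \<rho> = d)"

definition diffusion_nl :: "nat \<Rightarrow> (real \<Rightarrow> real) \<Rightarrow> real \<Rightarrow> real
     \<Rightarrow> (gpt \<Rightarrow> real) \<Rightarrow> (gpt \<Rightarrow> real) \<Rightarrow> bool" where
  "diffusion_nl N0 Di Ui \<tau> \<rho>n \<rho>1 \<longleftrightarrow>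
     (\<exists>\<rho>h. (\<forall>p\<in>grid N0. \<rho>h p > 0) \<and>
        (\<forall>p\<in>grid N0. (\<rho>h p - \<rho>n p) / \<tau> =
             divMgrad N0 (avgh N0 (\<lambda>q. Di (\<rho>n q))) \<rho>h p) \<and>
        (let \<rho>half = (\<lambda>q. (\<rho>n q + \<rho>h q) / 2);
             M = avgh N0 (\<lambda>q. Di (\<rho>half q) * \<rho>half q)
         in (\<forall>p\<in>grid N0. \<rho>1 p > 0) \<and>
            (\<forall>p\<in>grid N0. (\<rho>1 p - \<rho>n p) / \<tau> =
               divMgrad N0 M (\<lambda>q. Qi Ui (\<rho>1 q) (\<rho>n q) + \<tau> * (ln (\<rho>1 q) - ln (\<rho>n q))) p)))"

definition diffusion_step :: "nat \<Rightarrow> (real \<Rightarrow> real) \<Rightarrow> real \<Rightarrow> real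
     \<Rightarrow> (gpt \<Rightarrow> real) \<Rightarrow> (gpt \<Rightarrow> real) \<Rightarrow> bool" where
  "diffusion_step N0 Di Ui \<tau> \<rho>n \<rho>1 \<longleftrightarrow>
     (if diff_const Di
      then (\<forall>p\<in>grid N0. \<rho>1 p = heat_exp N0 (Di 1 * \<tau>) \<rho>n p)
      else diffusion_nl N0 Di Ui \<tau> \<rho>n \<rho>1)"

definition supported :: "nat \<Rightarrow> nat \<Rightarrow> (nat \<Rightarrow> gpt \<Rightarrow> real) \<Rightarrow> bool" where
  "supported N N0 c \<longleftrightarrow> (\<forall>i p. (i \<notin> {1..N} \<or> p \<notin> grid N0) \<longrightarrow> c i p = 0)"

definition positive_state :: "nat \<Rightarrow> nat \<Rightarrow> (nat \<Rightarrow> gpt \<Rightarrow> real) \<Rightarrow> bool" where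
  "positive_state N N0 c \<longleftrightarrow> (\<forall>i\<in>{1..N}. \<forall>p\<in>grid N0. c i p > 0)"

definition energy_h :: "nat \<Rightarrow> nat \<Rightarrow> (nat \<Rightarrow> real) \<Rightarrow> (nat \<Rightarrow> gpt \<Rightarrow> real) \<Rightarrow> real" where
  "energy_h N N0 U c = (1 / real N0) ^ 3 *
     (\<Sum>p\<in>grid N0. \<Sum>i=1..N. c i p * (ln (c i p) - 1) + c i p * U i)"

definition splitting_step :: "nat \<Rightarrow> nat \<Rightarrow> (nat \<Rightarrow> real) \<Rightarrow> (nat \<Rightarrow> real) \<Rightarrow> (nat \<Rightarrow> real)
    \<Rightarrow> real \<Rightarrow> (nat \<Rightarrow> real \<Rightarrow> real) \<Rightarrow> nat \<Rightarrow> real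
    \<Rightarrow> (nat \<Rightarrow> gpt \<Rightarrow> real) \<Rightarrow> (nat \<Rightarrow> gpt \<Rightarrow> real) \<Rightarrow> bool" where
  "splitting_step N r \<alpha> \<beta> U k1m D N0 \<Delta>t cn cn1 \<longleftrightarrow>
     supported N N0 cn1 \<and>
     (\<exists>c1 c2.
        (\<forall>p\<in>grid N0. reaction_step N r \<alpha> \<beta> U k1m (\<Delta>t / 2) (\<lambda>i. cn i p) (\<lambda>i. c1 i p)) \<and>
        (\<forall>i\<in>{1..N}. diffusion_step N0 (D i) (U i) \<Delta>t (c1 i) (c2 i)) \<and>
        (\<forall>p\<in>grid N0. reaction_step N r \<alpha> \<beta> U k1m (\<Delta>t / 2) (\<lambda>i. c2 i p) (\<lambda>i. cn1 i p)))"

end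

theory Submission
  imports Defs
begin

text \<open>
  Each of the three stages has a unique positive solution and does not increase the discrete free
  energy; the splitting step is their composition.

  In a reaction stage the reaction extent \<open>R\<close> solves a scalar equation \<open>ln (R/\<kappa> + 1) + g R = 0\<close>
  with \<open>g\<close> nondecreasing and comparable with \<open>F'(R) = \<Sum>\<^sub>i \<sigma>\<^sub>i (ln (c\<^sub>i + \<sigma>\<^sub>i R) + U\<^sub>i)\<close>. Since \<open>F'\<close>
  tends to \<open>\<mp>\<infinity>\<close> at the two ends of the interval of extents keeping all concentrations positive, the
  left-hand side increases strictly from \<open>-\<infinity>\<close> to \<open>+\<infinity>\<close>. Energy decay comes from multiplying the
  corrector equation by \<open>R\<close>.

  For a constant diffusion coefficient, \<open>exp (\<tau> D \<Delta>\<^sub>h)\<close> is a doubly stochastic matrix, and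
  Jensen's inequality for the convex entropy gives the decay. For a nonlinear coefficient, both
  implicit equations have the form \<open>x - b = \<tau> div (M grad \<phi>(x))\<close> with \<open>M \<ge> 0\<close> and \<open>\<phi>\<close> strictly
  increasing: summation by parts gives uniqueness, a monotone fixpoint argument between constant
  barriers gives existence, and testing with \<open>\<phi>(x)\<close> gives decay because
  \<open>(\<rho>' - \<rho>) Q(\<rho>', \<rho>) = F(\<rho>') - F(\<rho>)\<close>.
\<close>

section \<open>Periodic grid and summation by parts\<close>

lemma finite_grid [simp]: "finite (grid N0)"
  by (simp add: grid_def)

lemma grid_nonempty: "N0 \<ge> 1 \<Longrightarrow> grid N0 \<noteq> {}"
  by (auto simp: grid_def)

lemma shp_in_grid: "p \<in> grid N0 \<Longrightarrow> shp N0 d p \<in> grid N0"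
  by (cases p) (auto simp: grid_def shp_def)

lemma shm_in_grid: "p \<in> grid N0 \<Longrightarrow> shm N0 d p \<in> grid N0"
  by (cases p) (auto simp: grid_def shm_def)

lemma shp_shm: "p \<in> grid N0 \<Longrightarrow> shp N0 d (shm N0 d p) = p"
proof -
  have "i < n \<Longrightarrow> Suc ((i + n - Suc 0) mod n) mod n = i" for i n :: nat
    by (cases i) (auto simp: mod_Suc_eq)
  then show "p \<in> grid N0 \<Longrightarrow> ?thesis"
    by (cases p) (auto simp: grid_def shm_def shp_def)
qed

lemma shm_shp: "p \<in> grid N0 \<Longrightarrow> shm N0 d (shp N0 d p) = p"
proof -
  have "i < n \<Longrightarrow> (Suc i mod n + n - Suc 0) mod n = i" for i n :: nat
    by (cases "Suc i = n") auto
  then show "p \<in> grid N0 \<Longrightarrow> ?thesis"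
    by (cases p) (auto simp: grid_def shm_def shp_def)
qed

lemma bij_betw_shm: "bij_betw (shm N0 d) (grid N0) (grid N0)"
  by (rule bij_betw_byWitness[where f'="shp N0 d"]) (auto simp: shp_shm shm_shp shp_in_grid shm_in_grid)

lemma bij_betw_shp: "bij_betw (shp N0 d) (grid N0) (grid N0)"
  by (rule bij_betw_byWitness[where f'="shm N0 d"]) (auto simp: shp_shm shm_shp shp_in_grid shm_in_grid)

lemma sum_grid_shm: "(\<Sum>p\<in>grid N0. f (shm N0 d p)) = (\<Sum>p\<in>grid N0. f p)"
  using sum.reindex_bij_betw[OF bij_betw_shm] by blast

lemma sum_grid_shp: "(\<Sum>p\<in>grid N0. f (shp N0 d p)) = (\<Sum>p\<in>grid N0. f p)"
  using sum.reindex_bij_betw[OF bij_betw_shp] by blast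

lemma avgh_nonneg:
  assumes "\<And>q. q \<in> grid N0 \<Longrightarrow> w q \<ge> 0" and "q \<in> grid N0"
  shows "avgh N0 w d q \<ge> 0"
  using assms shp_in_grid[OF assms(2)] by (simp add: avgh_def)

lemma divh_summation_by_parts:
  "(\<Sum>p\<in>grid N0. v p * divh N0 W p) = - (\<Sum>p\<in>grid N0. \<Sum>d<3. W d p * gradh N0 v d p)"
proof -
  have shift: "(\<Sum>p\<in>grid N0. v p * W d (shm N0 d p)) = (\<Sum>p\<in>grid N0. v (shp N0 d p) * W d p)" for d
  proof -
    have "(\<Sum>p\<in>grid N0. v p * W d (shm N0 d p)) = (\<Sum>p\<in>grid N0. v (shp N0 d (shm N0 d p)) * W d (shm N0 d p))"
      by (rule sum.cong) (auto simp: shp_shm)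
    also have "\<dots> = (\<Sum>p\<in>grid N0. v (shp N0 d p) * W d p)"
      by (rule sum_grid_shm)
    finally show ?thesis .
  qed
  have "(\<Sum>p\<in>grid N0. v p * divh N0 W p) =
     (\<Sum>d<3. real N0 * ((\<Sum>p\<in>grid N0. v p * W d p) - (\<Sum>p\<in>grid N0. v p * W d (shm N0 d p))))"
    unfolding divh_def
    by (simp add: sum_distrib_left sum_distrib_right sum_subtractf algebra_simps sum.swap[of _ "grid N0"])
  also have "\<dots> = (\<Sum>d<3. real N0 * ((\<Sum>p\<in>grid N0. v p * W d p) - (\<Sum>p\<in>grid N0. v (shp N0 d p) * W d p)))"
    by (simp only: shift)
  also have "\<dots> = - (\<Sum>p\<in>grid N0. \<Sum>d<3. W d p * gradh N0 v d p)"
    unfolding gradh_def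
    by (simp add: sum_distrib_left sum_subtractf algebra_simps sum.swap[of _ "grid N0"] sum_negf)
  finally show ?thesis .
qed

lemma divMgrad_summation_by_parts:
  "(\<Sum>p\<in>grid N0. v p * divMgrad N0 M u p) = - (\<Sum>p\<in>grid N0. \<Sum>d<3. M d p * gradh N0 u d p * gradh N0 v d p)"
  unfolding divMgrad_def by (simp add: divh_summation_by_parts)

lemma sum_divMgrad_eq_0: "(\<Sum>p\<in>grid N0. divMgrad N0 M u p) = 0"
  using divMgrad_summation_by_parts[where v="\<lambda>_. 1" and M=M and u=u] by (simp add: gradh_def)

lemma sum_mult_divMgrad_nonpos:
  assumes "\<And>d q. q \<in> grid N0 \<Longrightarrow> M d q \<ge> 0"
  shows "(\<Sum>p\<in>grid N0. u p * divMgrad N0 M u p) \<le> 0"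
proof -
  have "(\<Sum>p\<in>grid N0. \<Sum>d<3. M d p * gradh N0 u d p * gradh N0 u d p) \<ge> 0"
    by (intro sum_nonneg) (simp add: assms mult.assoc)
  then show ?thesis by (simp add: divMgrad_summation_by_parts)
qed

lemma divMgrad_stencil:
  "p \<in> grid N0 \<Longrightarrow> divMgrad N0 M u p = (\<Sum>d<3. real N0 * real N0 *
     (M d p * (u (shp N0 d p) - u p) - M d (shm N0 d p) * (u p - u (shm N0 d p))))"
  unfolding divMgrad_def divh_def gradh_def by (simp add: shp_shm algebra_simps)

lemma divMgrad_cong:
  assumes "p \<in> grid N0" and "\<And>d q. q \<in> grid N0 \<Longrightarrow> M d q = M' d q"
    and "\<And>q. q \<in> grid N0 \<Longrightarrow> u q = u' q"
  shows "divMgrad N0 M u p = divMgrad N0 M' u' p"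
  using assms by (simp add: divMgrad_stencil shp_in_grid shm_in_grid)

lemma divMgrad_diff:
  "divMgrad N0 M u p - divMgrad N0 M v p = divMgrad N0 M (\<lambda>q. u q - v q) p"
  unfolding divMgrad_def divh_def gradh_def
  by (simp add: sum_subtractf[symmetric] algebra_simps diff_divide_distrib)

section \<open>Implicit equations with monotone nonlinearity\<close>

lemma implicit_step_dissipation:
  assumes M: "\<And>d q. q \<in> grid N0 \<Longrightarrow> M d q \<ge> 0" and tau: "\<tau> > 0"
    and eq: "\<forall>p\<in>grid N0. (x p - b p) / \<tau> = divMgrad N0 M u p"
  shows "(\<Sum>p\<in>grid N0. (x p - b p) * u p) \<le> 0"
proof -
  have "(\<Sum>p\<in>grid N0. (x p - b p) * u p) = \<tau> * (\<Sum>p\<in>grid N0. u p * divMgrad N0 M u p)"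
    unfolding sum_distrib_left using eq tau by (intro sum.cong) (auto simp: field_simps)
  also have "\<dots> \<le> 0"
    using sum_mult_divMgrad_nonpos[OF M, where u=u] tau by (simp add: mult_nonneg_nonpos)
  finally show ?thesis .
qed

lemma implicit_step_unique:
  assumes M: "\<And>d q. q \<in> grid N0 \<Longrightarrow> M d q \<ge> 0" and tau: "\<tau> > 0"
    and mono: "\<And>p y z. p \<in> grid N0 \<Longrightarrow> 0 < y \<Longrightarrow> y < z \<Longrightarrow> \<phi> p y < \<phi> p z"
    and pos: "\<forall>p\<in>grid N0. x p > 0" and pos': "\<forall>p\<in>grid N0. x' p > 0"
    and eq: "\<forall>p\<in>grid N0. (x p - b p) / \<tau> = divMgrad N0 M (\<lambda>q. \<phi> q (x q)) p"
    and eq': "\<forall>p\<in>grid N0. (x' p - b p) / \<tau> = divMgrad N0 M (\<lambda>q. \<phi> q (x' q)) p"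
  shows "\<forall>p\<in>grid N0. x p = x' p"
proof (rule ccontr)
  define w where "w = (\<lambda>q. \<phi> q (x q) - \<phi> q (x' q))"
  have eq_diff: "\<forall>p\<in>grid N0. (x p - x' p) / \<tau> = divMgrad N0 M w p"
  proof
    fix p assume "p \<in> grid N0"
    then have "(x p - x' p) / \<tau> = (x p - b p) / \<tau> - (x' p - b p) / \<tau>"
      by (simp add: diff_divide_distrib)
    then show "(x p - x' p) / \<tau> = divMgrad N0 M w p"
      using eq eq' \<open>p \<in> grid N0\<close> by (simp add: w_def divMgrad_diff)
  qed
  have le: "(\<Sum>p\<in>grid N0. (x p - x' p) * w p) \<le> 0"
    by (rule implicit_step_dissipation[OF M tau eq_diff])
  have term_pos: "(x p - x' p) * w p > 0" if p: "p \<in> grid N0" and ne: "x p \<noteq> x' p" for p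
  proof (cases "x p < x' p")
    case True
    then have "w p < 0" using mono[OF p, of "x p" "x' p"] pos p by (simp add: w_def)
    with True show ?thesis by (simp add: mult_neg_neg)
  next
    case False
    with ne have "x' p < x p" by simp
    then have "w p > 0" using mono[OF p, of "x' p" "x p"] pos' p by (simp add: w_def)
    with \<open>x' p < x p\<close> show ?thesis by simp
  qed
  have term_nonneg: "(x q - x' q) * w q \<ge> 0" if "q \<in> grid N0" for q
    using term_pos[OF that] by (cases "x q = x' q") (simp_all add: less_imp_le)
  assume "\<not> (\<forall>p\<in>grid N0. x p = x' p)"
  then obtain p where p: "p \<in> grid N0" "x p \<noteq> x' p" by blast
  have "(\<Sum>p\<in>grid N0. (x p - x' p) * w p) > 0"
    using term_pos[OF p] term_nonneg by (intro sum_pos2[OF finite_grid p(1)])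
  with le show False by simp
qed

text \<open>Knaster--Tarski on an order interval of functions: the supremum of all post-fixpoints is a fixpoint.\<close>

lemma monotone_box_fixpoint:
  fixes T :: "('a \<Rightarrow> real) \<Rightarrow> 'a \<Rightarrow> real" and lo hi :: "'a \<Rightarrow> real" and G :: "'a set"
  defines "in_box x \<equiv> \<forall>p\<in>G. lo p \<le> x p \<and> x p \<le> hi p"
  assumes lo_hi: "in_box lo"
    and maps: "\<And>x. in_box x \<Longrightarrow> in_box (T x)"
    and mono: "\<And>x y p. in_box x \<Longrightarrow> in_box y \<Longrightarrow> \<forall>q\<in>G. x q \<le> y q \<Longrightarrow> p \<in> G \<Longrightarrow> T x p \<le> T y p"
  shows "\<exists>x. in_box x \<and> (\<forall>p\<in>G. T x p = x p)"
proof -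
  define S where "S = {x. in_box x \<and> (\<forall>p\<in>G. x p \<le> T x p)}"
  define xs where "xs p = Sup ((\<lambda>x. x p) ` S)" for p
  have lo_in_S: "lo \<in> S"
    using maps[OF lo_hi] lo_hi by (auto simp: S_def in_box_def)
  have ne: "(\<lambda>x. x p) ` S \<noteq> {}" for p
    using lo_in_S by blast
  have upper: "x p \<le> xs p" if "x \<in> S" "p \<in> G" for x p
    unfolding xs_def using that by (intro cSup_upper) (auto simp: S_def in_box_def bdd_above_def)
  have box_xs: "in_box xs"
    unfolding in_box_def
  proof
    fix p assume p: "p \<in> G"
    have "xs p \<le> hi p"
      unfolding xs_def using ne p by (intro cSup_least) (auto simp: S_def in_box_def)
    with upper[OF lo_in_S p] show "lo p \<le> xs p \<and> xs p \<le> hi p" by simp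
  qed
  have xs_post: "xs p \<le> T xs p" if p: "p \<in> G" for p
    unfolding xs_def[of p]
  proof (rule cSup_least[OF ne])
    fix v assume "v \<in> (\<lambda>x. x p) ` S"
    then obtain x where x: "x \<in> S" "v = x p" by blast
    then have "x p \<le> T x p" using p by (auto simp: S_def)
    also have "T x p \<le> T xs p"
      using mono[OF _ box_xs] x upper p by (auto simp: S_def)
    finally show "v \<le> T xs p" using x by simp
  qed
  have "T xs \<in> S"
    unfolding S_def using maps[OF box_xs] mono[OF box_xs maps[OF box_xs]] xs_post by auto
  then have "T xs p = xs p" if "p \<in> G" for p
    using upper[of "T xs" p] xs_post[of p] that by simp
  with box_xs show ?thesis by blast
qed

lemma strict_mono_continuous_solve:
  fixes L :: "real \<Rightarrow> real"
  assumes "a \<le> b" and "continuous_on {a..b} L"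
    and mono: "\<And>y z. a \<le> y \<Longrightarrow> y < z \<Longrightarrow> L y < L z"
    and "L a \<le> v" "v \<le> L b"
  shows "\<exists>!y. a \<le> y \<and> y \<le> b \<and> L y = v"
proof (rule ex_ex1I)
  show "\<exists>y. a \<le> y \<and> y \<le> b \<and> L y = v"
    using IVT'[of L a v b] assms by auto
next
  fix y z assume "a \<le> y \<and> y \<le> b \<and> L y = v" "a \<le> z \<and> z \<le> b \<and> L z = v"
  then show "y = z"
    using mono[of y z] mono[of z y] by (cases y z rule: linorder_cases) auto
qed

definition stencil_diag :: "nat \<Rightarrow> (nat \<Rightarrow> gpt \<Rightarrow> real) \<Rightarrow> gpt \<Rightarrow> real" where
  "stencil_diag N0 M p = (\<Sum>d<3. M d p + M d (shm N0 d p))"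

definition stencil_offdiag :: "nat \<Rightarrow> (nat \<Rightarrow> gpt \<Rightarrow> real) \<Rightarrow> (gpt \<Rightarrow> real) \<Rightarrow> gpt \<Rightarrow> real" where
  "stencil_offdiag N0 M u p = (\<Sum>d<3. M d p * u (shp N0 d p) + M d (shm N0 d p) * u (shm N0 d p))"

lemma divMgrad_eq_stencil:
  "p \<in> grid N0 \<Longrightarrow>
     divMgrad N0 M u p = real N0 * real N0 * (stencil_offdiag N0 M u p - stencil_diag N0 M p * u p)"
  unfolding divMgrad_stencil stencil_offdiag_def stencil_diag_def
  by (simp add: sum_distrib_left sum_distrib_right sum_subtractf[symmetric] algebra_simps)

lemma stencil_diag_nonneg:
  "(\<And>d q. q \<in> grid N0 \<Longrightarrow> M d q \<ge> 0) \<Longrightarrow> p \<in> grid N0 \<Longrightarrow> stencil_diag N0 M p \<ge> 0"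
  unfolding stencil_diag_def by (intro sum_nonneg add_nonneg_nonneg) (auto simp: shm_in_grid)

lemma stencil_offdiag_mono:
  assumes "\<And>d q. q \<in> grid N0 \<Longrightarrow> M d q \<ge> 0" and "p \<in> grid N0"
    and "\<And>q. q \<in> grid N0 \<Longrightarrow> u q \<le> v q"
  shows "stencil_offdiag N0 M u p \<le> stencil_offdiag N0 M v p"
  unfolding stencil_offdiag_def
  by (intro sum_mono add_mono mult_left_mono assms shp_in_grid shm_in_grid)

lemma stencil_offdiag_cong:
  "p \<in> grid N0 \<Longrightarrow> (\<And>q. q \<in> grid N0 \<Longrightarrow> u q = v q) \<Longrightarrow>
     stencil_offdiag N0 M u p = stencil_offdiag N0 M v p"
  by (simp add: stencil_offdiag_def shp_in_grid shm_in_grid)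

lemma stencil_offdiag_const: "stencil_offdiag N0 M (\<lambda>_. c) p = stencil_diag N0 M p * c"
  unfolding stencil_offdiag_def stencil_diag_def by (simp add: sum_distrib_left algebra_simps)

definition implicit_lhs :: "nat \<Rightarrow> (nat \<Rightarrow> gpt \<Rightarrow> real) \<Rightarrow> real \<Rightarrow> (gpt \<Rightarrow> real \<Rightarrow> real) \<Rightarrow> gpt \<Rightarrow> real \<Rightarrow> real" where
  "implicit_lhs N0 M \<tau> \<phi> p y = y + \<tau> * real N0 * real N0 * stencil_diag N0 M p * \<phi> p y"

definition implicit_rhs :: "nat \<Rightarrow> (nat \<Rightarrow> gpt \<Rightarrow> real) \<Rightarrow> real \<Rightarrow> (gpt \<Rightarrow> real \<Rightarrow> real)
    \<Rightarrow> (gpt \<Rightarrow> real) \<Rightarrow> (gpt \<Rightarrow> real) \<Rightarrow> gpt \<Rightarrow> real" where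
  "implicit_rhs N0 M \<tau> \<phi> b x p = b p + \<tau> * real N0 * real N0 * stencil_offdiag N0 M (\<lambda>q. \<phi> q (x q)) p"

lemma implicit_eq_iff:
  assumes "p \<in> grid N0" and "\<tau> > 0"
  shows "(x p - b p) / \<tau> = divMgrad N0 M (\<lambda>q. \<phi> q (x q)) p \<longleftrightarrow>
    implicit_lhs N0 M \<tau> \<phi> p (x p) = implicit_rhs N0 M \<tau> \<phi> b x p"
  using assms by (simp add: divMgrad_eq_stencil implicit_lhs_def implicit_rhs_def field_simps)

context
  fixes N0 :: nat and M :: "nat \<Rightarrow> gpt \<Rightarrow> real" and \<tau> :: real and \<phi> :: "gpt \<Rightarrow> real \<Rightarrow> real"
  assumes M: "\<And>d q. q \<in> grid N0 \<Longrightarrow> M d q \<ge> 0" and tau: "\<tau> > 0"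
    and mono: "\<And>p y z. p \<in> grid N0 \<Longrightarrow> 0 < y \<Longrightarrow> y < z \<Longrightarrow> \<phi> p y < \<phi> p z"
begin

lemma implicit_lhs_strict_mono:
  assumes "p \<in> grid N0" "0 < y" "y < z"
  shows "implicit_lhs N0 M \<tau> \<phi> p y < implicit_lhs N0 M \<tau> \<phi> p z"
proof -
  have "0 \<le> \<tau> * real N0 * real N0 * stencil_diag N0 M p"
    using tau stencil_diag_nonneg[OF M assms(1)] by simp
  from mult_left_mono[OF less_imp_le[OF mono[OF assms]] this] assms(3) show ?thesis
    by (simp add: implicit_lhs_def)
qed

lemma implicit_rhs_mono:
  assumes "p \<in> grid N0" and "\<forall>q\<in>grid N0. 0 < x q \<and> x q \<le> x' q"
  shows "implicit_rhs N0 M \<tau> \<phi> b x p \<le> implicit_rhs N0 M \<tau> \<phi> b x' p"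
proof -
  have phi_le: "\<phi> q (x q) \<le> \<phi> q (x' q)" if "q \<in> grid N0" for q
    using mono[OF that, of "x q" "x' q"] assms(2) that by (cases "x q = x' q") auto
  have "stencil_offdiag N0 M (\<lambda>q. \<phi> q (x q)) p \<le> stencil_offdiag N0 M (\<lambda>q. \<phi> q (x' q)) p"
    by (rule stencil_offdiag_mono[where M=M, OF M assms(1) phi_le])
  then show ?thesis using tau by (simp add: implicit_rhs_def mult_left_mono)
qed

text \<open>
  The implicit equation is solved by a monotone fixpoint iteration: at each grid point the
  equation \<open>implicit_lhs y = implicit_rhs x\<close> has a unique solution \<open>T x\<close>, and \<open>T\<close> is monotone because
  the off-diagonal weights are nonnegative. Barriers \<open>xl \<le> b \<le> xu\<close> on which \<open>\<phi>\<close> is constant keep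
  \<open>T\<close> inside the box \<open>[xl, xu]\<close>.
\<close>

context
  fixes b xl xu :: "gpt \<Rightarrow> real" and ml mu :: real
  assumes cont: "\<And>p. p \<in> grid N0 \<Longrightarrow> continuous_on {0<..} (\<phi> p)"
    and barrier: "\<And>p. p \<in> grid N0 \<Longrightarrow>
       0 < xl p \<and> xl p \<le> b p \<and> b p \<le> xu p \<and> \<phi> p (xl p) = ml \<and> \<phi> p (xu p) = mu"
begin

lemma implicit_local_solution:
  assumes p: "p \<in> grid N0" and box: "\<forall>q\<in>grid N0. xl q \<le> x q \<and> x q \<le> xu q"
  shows "\<exists>!y. xl p \<le> y \<and> y \<le> xu p \<and> implicit_lhs N0 M \<tau> \<phi> p y = implicit_rhs N0 M \<tau> \<phi> b x p"
proof (rule strict_mono_continuous_solve)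
  show "xl p \<le> xu p" using barrier[OF p] by linarith
  have "continuous_on {xl p..xu p} (\<phi> p)"
    by (rule continuous_on_subset[OF cont[OF p]]) (use barrier[OF p] in auto)
  then show "continuous_on {xl p..xu p} (implicit_lhs N0 M \<tau> \<phi> p)"
    unfolding implicit_lhs_def by (intro continuous_intros)
  show "implicit_lhs N0 M \<tau> \<phi> p y < implicit_lhs N0 M \<tau> \<phi> p z" if "xl p \<le> y" "y < z" for y z
  proof -
    have "0 < y" using barrier[OF p] that by linarith
    from implicit_lhs_strict_mono[OF p this that(2)] show ?thesis .
  qed
  have bounds: "0 < xl q \<and> xl q \<le> x q \<and> x q \<le> xu q" if "q \<in> grid N0" for q
    using barrier[OF that] box that by auto
  then have pos: "\<forall>q\<in>grid N0. 0 < xl q \<and> xl q \<le> x q" "\<forall>q\<in>grid N0. 0 < x q \<and> x q \<le> xu q"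
    by (meson less_le_trans)+
  have "stencil_offdiag N0 M (\<lambda>q. \<phi> q (xl q)) p = stencil_offdiag N0 M (\<lambda>_. ml) p"
    "stencil_offdiag N0 M (\<lambda>q. \<phi> q (xu q)) p = stencil_offdiag N0 M (\<lambda>_. mu) p"
    using barrier by (auto intro!: stencil_offdiag_cong[OF p])
  then have "implicit_lhs N0 M \<tau> \<phi> p (xl p) \<le> implicit_rhs N0 M \<tau> \<phi> b xl p"
    "implicit_rhs N0 M \<tau> \<phi> b xu p \<le> implicit_lhs N0 M \<tau> \<phi> p (xu p)"
    using barrier[OF p] by (simp_all add: implicit_lhs_def implicit_rhs_def stencil_offdiag_const algebra_simps)
  moreover note implicit_rhs_mono[OF p pos(1), of b] implicit_rhs_mono[OF p pos(2), of b]
  ultimately show "implicit_lhs N0 M \<tau> \<phi> p (xl p) \<le> implicit_rhs N0 M \<tau> \<phi> b x p"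
    "implicit_rhs N0 M \<tau> \<phi> b x p \<le> implicit_lhs N0 M \<tau> \<phi> p (xu p)"
    by simp_all
qed

lemma implicit_step_exists:
  "\<exists>x. (\<forall>p\<in>grid N0. x p > 0) \<and>
    (\<forall>p\<in>grid N0. (x p - b p) / \<tau> = divMgrad N0 M (\<lambda>q. \<phi> q (x q)) p)"
proof -
  define in_box where "in_box x \<longleftrightarrow> (\<forall>p\<in>grid N0. xl p \<le> x p \<and> x p \<le> xu p)" for x
  define T where "T x p = (THE y. xl p \<le> y \<and> y \<le> xu p \<and> implicit_lhs N0 M \<tau> \<phi> p y = implicit_rhs N0 M \<tau> \<phi> b x p)"
    for x p
  have T: "xl p \<le> T x p \<and> T x p \<le> xu p \<and> implicit_lhs N0 M \<tau> \<phi> p (T x p) = implicit_rhs N0 M \<tau> \<phi> b x p"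
    if "p \<in> grid N0" "in_box x" for x p
    unfolding T_def using implicit_local_solution[OF that[unfolded in_box_def]] by (rule theI')
  have T_mono: "T x p \<le> T x' p"
    if "in_box x" "in_box x'" "\<forall>q\<in>grid N0. x q \<le> x' q" "p \<in> grid N0" for x x' p
  proof (rule ccontr)
    have "0 < xl q \<and> xl q \<le> x q \<and> x q \<le> x' q" if "q \<in> grid N0" for q
      using that barrier \<open>in_box x\<close> \<open>\<forall>q\<in>grid N0. x q \<le> x' q\<close> unfolding in_box_def by auto
    then have "\<forall>q\<in>grid N0. 0 < x q \<and> x q \<le> x' q" by (meson less_le_trans)
    note rhs = implicit_rhs_mono[OF that(4) this, of b]
    assume "\<not> T x p \<le> T x' p"
    moreover have "0 < T x' p" using T[OF that(4,2)] barrier[OF that(4)] by linarith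
    ultimately have "implicit_lhs N0 M \<tau> \<phi> p (T x' p) < implicit_lhs N0 M \<tau> \<phi> p (T x p)"
      using implicit_lhs_strict_mono[OF that(4)] by simp
    with T[OF that(4,1)] T[OF that(4,2)] rhs show False by simp
  qed
  have "\<exists>x. in_box x \<and> (\<forall>p\<in>grid N0. T x p = x p)"
    unfolding in_box_def
  proof (rule monotone_box_fixpoint)
    show "\<forall>p\<in>grid N0. xl p \<le> xl p \<and> xl p \<le> xu p"
      using barrier by (meson order.refl order_trans)
    show "\<forall>p\<in>grid N0. xl p \<le> T x p \<and> T x p \<le> xu p" if "\<forall>p\<in>grid N0. xl p \<le> x p \<and> x p \<le> xu p" for x
      using T that unfolding in_box_def by blast
    show "T x p \<le> T x' p" if "\<forall>p\<in>grid N0. xl p \<le> x p \<and> x p \<le> xu p"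
      "\<forall>p\<in>grid N0. xl p \<le> x' p \<and> x' p \<le> xu p" "\<forall>q\<in>grid N0. x q \<le> x' q" "p \<in> grid N0" for x x' p
      using T_mono that unfolding in_box_def by blast
  qed
  then obtain x where "in_box x" and fixed: "\<forall>p\<in>grid N0. T x p = x p"
    by blast
  show ?thesis
  proof (intro exI conjI ballI)
    fix p assume p: "p \<in> grid N0"
    show "x p > 0" using \<open>in_box x\<close> barrier[OF p] p by (auto simp: in_box_def)
    show "(x p - b p) / \<tau> = divMgrad N0 M (\<lambda>q. \<phi> q (x q)) p"
      using T[OF p \<open>in_box x\<close>] fixed p by (simp add: implicit_eq_iff[OF p tau])
  qed
qed

end

end

section \<open>Secant slopes and the entropy density\<close>

definition secant_slope :: "(real \<Rightarrow> real) \<Rightarrow> real \<Rightarrow> real \<Rightarrow> real \<Rightarrow> real" where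
  "secant_slope f d q y = (if y = q then d else (f y - f q) / (y - q))"

lemma secant_slope_mono:
  fixes f f' :: "real \<Rightarrow> real"
  assumes A: "open A" "connected A"
    and der: "\<And>w. w \<in> A \<Longrightarrow> (f has_real_derivative f' w) (at w)"
    and mono: "\<And>x y. x \<in> A \<Longrightarrow> y \<in> A \<Longrightarrow> x \<le> y \<Longrightarrow> f' x \<le> f' y"
    and q: "q \<in> A" and y: "y \<in> A" and z: "z \<in> A" and yz: "y \<le> z"
  shows "secant_slope f (f' q) q y \<le> secant_slope f (f' q) q z"
proof -
  have cvx: "convex_on A f" by (rule convex_on_realI[OF A(2) der mono])
  have tangent: "f x - f q \<ge> f' q * (x - q)" if "x \<in> A" for x
    using convex_on_imp_above_tangent[OF cvx A(2), of q x "f' q"] that q A(1) der[OF q]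
    by (simp add: interior_open has_field_derivative_at_within)
  consider "y = z" | "y < z" "z < q" | "y < q" "q < z" | "q < y" "y < z" | "y = q" "y < z" | "z = q" "y < z"
    using yz by linarith
  then show ?thesis
  proof cases
    case 2
    then show ?thesis using convex_on_slope_le(2)[OF cvx y q, of z] by (simp add: secant_slope_def)
  next
    case 3
    have "(f q - f z) / (q - z) = (f z - f q) / (z - q)" by (metis minus_diff_eq minus_divide_divide)
    then show ?thesis using 3 convex_on_slope_le[OF cvx y z, of q] by (simp add: secant_slope_def)
  next
    case 4
    then have "(f q - f y) / (q - y) \<le> (f q - f z) / (q - z)"
      using convex_on_slope_le(1)[OF cvx q z, of y] by simp
    then show ?thesis using 4 by (simp add: secant_slope_def divide_simps split: if_splits) argo
  next
    case 5
    then show ?thesis using tangent[OF z] by (simp add: secant_slope_def pos_le_divide_eq)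
  next
    case 6
    then show ?thesis using tangent[OF y] by (simp add: secant_slope_def neg_divide_le_eq)
  qed simp
qed

lemma continuous_on_secant_slope:
  fixes f f' :: "real \<Rightarrow> real"
  assumes A: "open A"
    and der: "\<And>w. w \<in> A \<Longrightarrow> (f has_real_derivative f' w) (at w)"
    and q: "q \<in> A"
  shows "continuous_on A (secant_slope f (f' q) q)"
proof (rule continuous_at_imp_continuous_on, rule ballI)
  fix w assume w: "w \<in> A"
  show "isCont (secant_slope f (f' q) q) w"
  proof (cases "w = q")
    case True
    have "((\<lambda>y. (f y - f q) / (y - q)) \<longlongrightarrow> f' q) (at q)"
      using der[OF q] by (simp add: has_field_derivative_iff)
    then have "(secant_slope f (f' q) q \<longlongrightarrow> f' q) (at q)"
      by (rule Lim_transform_eventually) (auto simp: secant_slope_def eventually_at_filter)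
    then show ?thesis using True by (simp add: isCont_def secant_slope_def)
  next
    case False
    have "\<forall>\<^sub>F y in nhds w. (f y - f q) / (y - q) = secant_slope f (f' q) q y"
      using t1_space_nhds[OF False] by eventually_elim (simp add: secant_slope_def)
    moreover have "isCont (\<lambda>y. (f y - f q) / (y - q)) w"
      using False DERIV_isCont[OF der[OF w]] by (intro continuous_intros) auto
    ultimately show ?thesis by (simp add: isCont_cong)
  qed
qed

lemma has_real_derivative_Fi: "y > 0 \<Longrightarrow> (Fi Ui has_real_derivative ln y + Ui) (at y)"
  unfolding Fi_def by (auto intro!: derivative_eq_intros simp: field_simps)

lemma convex_on_Fi: "convex_on {0<..} (Fi Ui)"
  by (rule convex_on_realI[OF connected_Ioi has_real_derivative_Fi]) auto

lemma Qi_eq_secant_slope: "q > 0 \<Longrightarrow> Qi Ui y q = secant_slope (Fi Ui) (ln q + Ui) q y"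
  unfolding Qi_def secant_slope_def using DERIV_imp_deriv[OF has_real_derivative_Fi] by auto

lemma Qi_mono:
  assumes "q > 0" "0 < y" "y \<le> z"
  shows "Qi Ui y q \<le> Qi Ui z q"
proof -
  have "secant_slope (Fi Ui) ((\<lambda>w. ln w + Ui) q) q y \<le> secant_slope (Fi Ui) ((\<lambda>w. ln w + Ui) q) q z"
    by (rule secant_slope_mono[where A="{0<..}"]) (use assms has_real_derivative_Fi in auto)
  then show ?thesis using assms by (simp add: Qi_eq_secant_slope)
qed

lemma continuous_on_Qi: "q > 0 \<Longrightarrow> continuous_on {0<..} (\<lambda>y. Qi Ui y q)"
  using continuous_on_secant_slope[of "{0<..}" "Fi Ui" "\<lambda>w. ln w + Ui" q] has_real_derivative_Fi
  by (simp add: Qi_eq_secant_slope)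

lemma Qi_diag: "q > 0 \<Longrightarrow> Qi Ui q q = ln q + Ui"
  by (simp add: Qi_eq_secant_slope secant_slope_def)

lemma diff_mult_Qi: "(y - q) * Qi Ui y q = Fi Ui y - Fi Ui q"
  unfolding Qi_def by auto

section \<open>Nonlinear diffusion step\<close>

definition nl_potential :: "real \<Rightarrow> real \<Rightarrow> real \<Rightarrow> real \<Rightarrow> real" where
  "nl_potential Ui \<tau> q y = Qi Ui y q + \<tau> * (ln y - ln q)"

lemma nl_potential_strict_mono:
  "q > 0 \<Longrightarrow> \<tau> > 0 \<Longrightarrow> 0 < y \<Longrightarrow> y < z \<Longrightarrow> nl_potential Ui \<tau> q y < nl_potential Ui \<tau> q z"
  unfolding nl_potential_def using Qi_mono[of q y z Ui] by (simp add: add_le_less_mono)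

lemma continuous_on_nl_potential: "q > 0 \<Longrightarrow> continuous_on {0<..} (nl_potential Ui \<tau> q)"
  unfolding nl_potential_def by (intro continuous_intros continuous_on_Qi) auto

lemma nl_potential_diag: "q > 0 \<Longrightarrow> nl_potential Ui \<tau> q q = ln q + Ui"
  by (simp add: nl_potential_def Qi_diag)

text \<open>
  At \<open>y\<^sub>0 = q exp ((m - ln q - Ui) / \<tau>)\<close> the logarithmic term equals \<open>m - (ln q + Ui)\<close>, so the
  monotonicity of \<open>Qi\<close> puts \<open>m\<close> between the potential at \<open>y\<^sub>0\<close> and at \<open>q\<close>.
\<close>

lemma nl_potential_attains_below:
  assumes q: "q > 0" and tau: "\<tau> > 0" and m: "m \<le> ln q + Ui"
  shows "\<exists>y. 0 < y \<and> y \<le> q \<and> nl_potential Ui \<tau> q y = m"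
proof -
  define y0 where "y0 = q * exp ((m - ln q - Ui) / \<tau>)"
  have y0: "0 < y0" using q by (simp add: y0_def)
  have "exp ((m - ln q - Ui) / \<tau>) \<le> 1" using m tau by (simp add: divide_nonpos_pos)
  then have y0q: "y0 \<le> q" using q by (simp add: y0_def mult_left_le)
  have "Qi Ui y0 q \<le> Qi Ui q q" using Qi_mono[OF q y0 y0q] .
  moreover have "ln y0 - ln q = (m - ln q - Ui) / \<tau>" using q by (simp add: y0_def ln_mult)
  ultimately have "nl_potential Ui \<tau> q y0 \<le> m" using q tau by (simp add: nl_potential_def Qi_diag)
  moreover have "m \<le> nl_potential Ui \<tau> q q" using nl_potential_diag[OF q] m by simp
  moreover have "continuous_on {y0..q} (nl_potential Ui \<tau> q)"
    by (rule continuous_on_subset[OF continuous_on_nl_potential[OF q]]) (use y0 in auto)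
  ultimately obtain y where "y0 \<le> y" "y \<le> q" "nl_potential Ui \<tau> q y = m"
    using IVT'[of "nl_potential Ui \<tau> q" y0 m q] y0q by auto
  then show ?thesis using y0 by (intro exI[of _ y]) auto
qed

lemma nl_potential_attains_above:
  assumes q: "q > 0" and tau: "\<tau> > 0" and m: "m \<ge> ln q + Ui"
  shows "\<exists>y. q \<le> y \<and> nl_potential Ui \<tau> q y = m"
proof -
  define y0 where "y0 = q * exp ((m - ln q - Ui) / \<tau>)"
  have "exp ((m - ln q - Ui) / \<tau>) \<ge> 1" using m tau by simp
  then have qy0: "q \<le> y0" using q by (simp add: y0_def mult_le_cancel_left1)
  have "Qi Ui q q \<le> Qi Ui y0 q" using Qi_mono[OF q q qy0] .
  moreover have "ln y0 - ln q = (m - ln q - Ui) / \<tau>" using q by (simp add: y0_def ln_mult)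
  ultimately have "nl_potential Ui \<tau> q y0 \<ge> m" using q tau by (simp add: nl_potential_def Qi_diag)
  moreover have "m \<ge> nl_potential Ui \<tau> q q" using nl_potential_diag[OF q] m by simp
  moreover have "continuous_on {q..y0} (nl_potential Ui \<tau> q)"
    by (rule continuous_on_subset[OF continuous_on_nl_potential[OF q]]) (use q in auto)
  ultimately obtain y where "q \<le> y" "y \<le> y0" "nl_potential Ui \<tau> q y = m"
    using IVT'[of "nl_potential Ui \<tau> q" q m y0] qy0 by auto
  then show ?thesis by auto
qed

lemma mobility_nonneg:
  assumes "\<forall>\<rho>>0. Di \<rho> > 0" and "\<And>q. q \<in> grid N0 \<Longrightarrow> w q > 0" and "q \<in> grid N0"
  shows "avgh N0 (\<lambda>q. Di (w q)) d q \<ge> 0" "avgh N0 (\<lambda>q. Di (w q) * w q) d q \<ge> 0"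
  using assms by (auto intro!: avgh_nonneg simp: less_imp_le)

definition nl_mobility :: "nat \<Rightarrow> (real \<Rightarrow> real) \<Rightarrow> (gpt \<Rightarrow> real) \<Rightarrow> (gpt \<Rightarrow> real) \<Rightarrow> nat \<Rightarrow> gpt \<Rightarrow> real" where
  "nl_mobility N0 Di \<rho>n \<rho>h = avgh N0 (\<lambda>q. Di ((\<rho>n q + \<rho>h q) / 2) * ((\<rho>n q + \<rho>h q) / 2))"

lemma nl_mobility_nonneg:
  assumes "\<forall>\<rho>>0. Di \<rho> > 0" and "\<forall>p\<in>grid N0. \<rho>n p > 0" "\<forall>p\<in>grid N0. \<rho>h p > 0" and "q \<in> grid N0"
  shows "nl_mobility N0 Di \<rho>n \<rho>h d q \<ge> 0"
  unfolding nl_mobility_def using assms by (intro mobility_nonneg(2)) (simp_all add: add_pos_pos)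

lemma diffusion_nl_iff:
  "diffusion_nl N0 Di Ui \<tau> \<rho>n \<rho>1 \<longleftrightarrow> (\<exists>\<rho>h. (\<forall>p\<in>grid N0. \<rho>h p > 0) \<and>
     (\<forall>p\<in>grid N0. (\<rho>h p - \<rho>n p) / \<tau> = divMgrad N0 (avgh N0 (\<lambda>q. Di (\<rho>n q))) \<rho>h p) \<and>
     (\<forall>p\<in>grid N0. \<rho>1 p > 0) \<and>
     (\<forall>p\<in>grid N0. (\<rho>1 p - \<rho>n p) / \<tau> =
        divMgrad N0 (nl_mobility N0 Di \<rho>n \<rho>h) (\<lambda>q. nl_potential Ui \<tau> (\<rho>n q) (\<rho>1 q)) p))"
  unfolding diffusion_nl_def Let_def nl_mobility_def nl_potential_def ..

lemma diffusion_nl_exists: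
  assumes N0: "N0 \<ge> 1" and tau: "\<tau> > 0" and D: "\<forall>\<rho>>0. Di \<rho> > 0"
    and pos: "\<forall>p\<in>grid N0. \<rho>n p > 0"
  shows "\<exists>\<rho>1. diffusion_nl N0 Di Ui \<tau> \<rho>n \<rho>1"
proof -
  define m0 where "m0 = Min (\<rho>n ` grid N0)"
  define m1 where "m1 = Max (\<rho>n ` grid N0)"
  have m0pos: "m0 > 0"
    unfolding m0_def using grid_nonempty[OF N0] pos by (subst Min_gr_iff) auto
  have "\<exists>x. (\<forall>p\<in>grid N0. x p > 0) \<and>
      (\<forall>p\<in>grid N0. (x p - \<rho>n p) / \<tau> = divMgrad N0 (avgh N0 (\<lambda>q. Di (\<rho>n q))) (\<lambda>q. x q) p)"
    using implicit_step_exists[where \<phi>="\<lambda>p y. y" and xl="\<lambda>_. m0" and xu="\<lambda>_. m1" and ml=m0 and mu=m1]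
      mobility_nonneg(1)[OF D] pos tau m0pos by (auto simp: m0_def m1_def)
  then obtain \<rho>h where \<rho>h_pos: "\<forall>p\<in>grid N0. \<rho>h p > 0"
    and \<rho>h_eq: "\<forall>p\<in>grid N0. (\<rho>h p - \<rho>n p) / \<tau> = divMgrad N0 (avgh N0 (\<lambda>q. Di (\<rho>n q))) \<rho>h p"
    by auto
  define ml where "ml = Min ((\<lambda>p. ln (\<rho>n p) + Ui) ` grid N0)"
  define mu where "mu = Max ((\<lambda>p. ln (\<rho>n p) + Ui) ` grid N0)"
  define xl where "xl p = (SOME y. 0 < y \<and> y \<le> \<rho>n p \<and> nl_potential Ui \<tau> (\<rho>n p) y = ml)" for p
  define xu where "xu p = (SOME y. \<rho>n p \<le> y \<and> nl_potential Ui \<tau> (\<rho>n p) y = mu)" for p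
  have xl: "0 < xl p \<and> xl p \<le> \<rho>n p \<and> nl_potential Ui \<tau> (\<rho>n p) (xl p) = ml" if "p \<in> grid N0" for p
    unfolding xl_def
    by (rule someI_ex, rule nl_potential_attains_below) (use pos that tau in \<open>auto simp: ml_def\<close>)
  have xu: "\<rho>n p \<le> xu p \<and> nl_potential Ui \<tau> (\<rho>n p) (xu p) = mu" if "p \<in> grid N0" for p
    unfolding xu_def
    by (rule someI_ex, rule nl_potential_attains_above) (use pos that tau in \<open>auto simp: mu_def\<close>)
  have "\<exists>x. (\<forall>p\<in>grid N0. x p > 0) \<and> (\<forall>p\<in>grid N0. (x p - \<rho>n p) / \<tau> =
      divMgrad N0 (nl_mobility N0 Di \<rho>n \<rho>h) (\<lambda>q. nl_potential Ui \<tau> (\<rho>n q) (x q)) p)"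
    by (rule implicit_step_exists[where xl=xl and xu=xu and ml=ml and mu=mu])
      (use nl_mobility_nonneg[OF D pos \<rho>h_pos] xl xu pos tau nl_potential_strict_mono
        continuous_on_nl_potential in auto)
  with \<rho>h_pos \<rho>h_eq show ?thesis
    unfolding diffusion_nl_iff by blast
qed

lemma diffusion_nl_energy_decay:
  assumes tau: "\<tau> > 0" and D: "\<forall>\<rho>>0. Di \<rho> > 0"
    and pos: "\<forall>p\<in>grid N0. \<rho>n p > 0" and step: "diffusion_nl N0 Di Ui \<tau> \<rho>n \<rho>1"
  shows "\<forall>p\<in>grid N0. \<rho>1 p > 0"
    and "(\<Sum>p\<in>grid N0. Fi Ui (\<rho>1 p)) \<le> (\<Sum>p\<in>grid N0. Fi Ui (\<rho>n p))"
proof -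
  obtain \<rho>h where \<rho>h_pos: "\<forall>p\<in>grid N0. \<rho>h p > 0" and pos1: "\<forall>p\<in>grid N0. \<rho>1 p > 0"
    and eq: "\<forall>p\<in>grid N0. (\<rho>1 p - \<rho>n p) / \<tau> =
      divMgrad N0 (nl_mobility N0 Di \<rho>n \<rho>h) (\<lambda>q. nl_potential Ui \<tau> (\<rho>n q) (\<rho>1 q)) p"
    using step unfolding diffusion_nl_iff by blast
  show "\<forall>p\<in>grid N0. \<rho>1 p > 0" by (fact pos1)
  have "(\<Sum>p\<in>grid N0. Fi Ui (\<rho>1 p) - Fi Ui (\<rho>n p)) \<le>
      (\<Sum>p\<in>grid N0. (\<rho>1 p - \<rho>n p) * nl_potential Ui \<tau> (\<rho>n p) (\<rho>1 p))"
  proof (rule sum_mono)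
    fix p assume p: "p \<in> grid N0"
    have "0 \<le> (\<rho>1 p - \<rho>n p) * (ln (\<rho>1 p) - ln (\<rho>n p))"
      using pos1 pos p by (cases "\<rho>1 p \<le> \<rho>n p") (simp_all add: mult_nonpos_nonpos)
    moreover have "(\<rho>1 p - \<rho>n p) * nl_potential Ui \<tau> (\<rho>n p) (\<rho>1 p)
        = Fi Ui (\<rho>1 p) - Fi Ui (\<rho>n p) + \<tau> * ((\<rho>1 p - \<rho>n p) * (ln (\<rho>1 p) - ln (\<rho>n p)))"
      unfolding nl_potential_def by (simp only: distrib_left diff_mult_Qi mult.left_commute)
    ultimately show "Fi Ui (\<rho>1 p) - Fi Ui (\<rho>n p) \<le> (\<rho>1 p - \<rho>n p) * nl_potential Ui \<tau> (\<rho>n p) (\<rho>1 p)"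
      using tau by simp
  qed
  also have "\<dots> \<le> 0"
    by (rule implicit_step_dissipation[OF nl_mobility_nonneg[OF D pos \<rho>h_pos] tau eq])
  finally show "(\<Sum>p\<in>grid N0. Fi Ui (\<rho>1 p)) \<le> (\<Sum>p\<in>grid N0. Fi Ui (\<rho>n p))"
    by (simp add: sum_subtractf)
qed

lemma diffusion_nl_cong:
  assumes agree: "\<forall>p\<in>grid N0. \<rho>n' p = \<rho>n p" and step: "diffusion_nl N0 Di Ui \<tau> \<rho>n' \<rho>1"
  shows "diffusion_nl N0 Di Ui \<tau> \<rho>n \<rho>1"
proof -
  obtain \<rho>h where "\<forall>p\<in>grid N0. \<rho>h p > 0" "\<forall>p\<in>grid N0. \<rho>1 p > 0"
    and half: "\<forall>p\<in>grid N0. (\<rho>h p - \<rho>n' p) / \<tau> = divMgrad N0 (avgh N0 (\<lambda>q. Di (\<rho>n' q))) \<rho>h p"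
    and full: "\<forall>p\<in>grid N0. (\<rho>1 p - \<rho>n' p) / \<tau> =
      divMgrad N0 (nl_mobility N0 Di \<rho>n' \<rho>h) (\<lambda>q. nl_potential Ui \<tau> (\<rho>n' q) (\<rho>1 q)) p"
    using step unfolding diffusion_nl_iff by blast
  moreover have "divMgrad N0 (avgh N0 (\<lambda>q. Di (\<rho>n' q))) \<rho>h p = divMgrad N0 (avgh N0 (\<lambda>q. Di (\<rho>n q))) \<rho>h p"
    "divMgrad N0 (nl_mobility N0 Di \<rho>n' \<rho>h) (\<lambda>q. nl_potential Ui \<tau> (\<rho>n' q) (\<rho>1 q)) p
      = divMgrad N0 (nl_mobility N0 Di \<rho>n \<rho>h) (\<lambda>q. nl_potential Ui \<tau> (\<rho>n q) (\<rho>1 q)) p"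
    if "p \<in> grid N0" for p
    using agree by (intro divMgrad_cong[OF that]; simp add: avgh_def nl_mobility_def shp_in_grid)+
  ultimately show ?thesis
    unfolding diffusion_nl_iff using agree by (intro exI[of _ \<rho>h]) simp
qed

lemma diffusion_nl_unique:
  assumes tau: "\<tau> > 0" and D: "\<forall>\<rho>>0. Di \<rho> > 0" and pos: "\<forall>p\<in>grid N0. \<rho>n p > 0"
    and step: "diffusion_nl N0 Di Ui \<tau> \<rho>n \<rho>1" and step': "diffusion_nl N0 Di Ui \<tau> \<rho>n \<rho>1'"
  shows "\<forall>p\<in>grid N0. \<rho>1 p = \<rho>1' p"
proof -
  obtain \<rho>h where \<rho>h: "\<forall>p\<in>grid N0. \<rho>h p > 0"
    "\<forall>p\<in>grid N0. (\<rho>h p - \<rho>n p) / \<tau> = divMgrad N0 (avgh N0 (\<lambda>q. Di (\<rho>n q))) (\<lambda>q. \<rho>h q) p"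
    and pos1: "\<forall>p\<in>grid N0. \<rho>1 p > 0"
    and eq: "\<forall>p\<in>grid N0. (\<rho>1 p - \<rho>n p) / \<tau> =
      divMgrad N0 (nl_mobility N0 Di \<rho>n \<rho>h) (\<lambda>q. nl_potential Ui \<tau> (\<rho>n q) (\<rho>1 q)) p"
    using step unfolding diffusion_nl_iff by auto
  obtain \<rho>h' where \<rho>h': "\<forall>p\<in>grid N0. \<rho>h' p > 0"
    "\<forall>p\<in>grid N0. (\<rho>h' p - \<rho>n p) / \<tau> = divMgrad N0 (avgh N0 (\<lambda>q. Di (\<rho>n q))) (\<lambda>q. \<rho>h' q) p"
    and pos1': "\<forall>p\<in>grid N0. \<rho>1' p > 0"
    and eq': "\<forall>p\<in>grid N0. (\<rho>1' p - \<rho>n p) / \<tau> =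
      divMgrad N0 (nl_mobility N0 Di \<rho>n \<rho>h') (\<lambda>q. nl_potential Ui \<tau> (\<rho>n q) (\<rho>1' q)) p"
    using step' unfolding diffusion_nl_iff by auto
  have "\<forall>p\<in>grid N0. \<rho>h p = \<rho>h' p"
    using mobility_nonneg(1)[OF D] pos
    by (intro implicit_step_unique[OF _ tau _ \<rho>h(1) \<rho>h'(1) \<rho>h(2) \<rho>h'(2)]) auto
  then have "divMgrad N0 (nl_mobility N0 Di \<rho>n \<rho>h') u p = divMgrad N0 (nl_mobility N0 Di \<rho>n \<rho>h) u p"
    if "p \<in> grid N0" for u p
    by (intro divMgrad_cong[OF that]) (simp_all add: nl_mobility_def avgh_def shp_in_grid)
  then have eq'': "\<forall>p\<in>grid N0. (\<rho>1' p - \<rho>n p) / \<tau> =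
      divMgrad N0 (nl_mobility N0 Di \<rho>n \<rho>h) (\<lambda>q. nl_potential Ui \<tau> (\<rho>n q) (\<rho>1' q)) p"
    using eq' by simp
  have "\<And>p y z. p \<in> grid N0 \<Longrightarrow> 0 < y \<Longrightarrow> y < z \<Longrightarrow>
      nl_potential Ui \<tau> (\<rho>n p) y < nl_potential Ui \<tau> (\<rho>n p) z"
    using nl_potential_strict_mono pos tau by blast
  from implicit_step_unique[OF nl_mobility_nonneg[OF D pos \<rho>h(1)] tau this pos1 pos1' eq eq'']
  show ?thesis .
qed

section \<open>Heat semigroup\<close>

definition laph_offdiag :: "nat \<Rightarrow> (gpt \<Rightarrow> real) \<Rightarrow> gpt \<Rightarrow> real" where
  "laph_offdiag N0 u p = real N0 * real N0 * (\<Sum>d<3. u (shp N0 d p) + u (shm N0 d p))"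

definition laph_center :: "nat \<Rightarrow> real" where
  "laph_center N0 = 6 * real N0 * real N0"

definition l1_grid :: "nat \<Rightarrow> (gpt \<Rightarrow> real) \<Rightarrow> real" where
  "l1_grid N0 u = (\<Sum>p\<in>grid N0. \<bar>u p\<bar>)"

lemma laph_eq_offdiag: "p \<in> grid N0 \<Longrightarrow> laph N0 u p = laph_offdiag N0 u p - laph_center N0 * u p"
  unfolding laph_def
  by (simp add: divMgrad_stencil laph_offdiag_def laph_center_def sum.distrib sum_subtractf
      sum_distrib_left algebra_simps)

lemma laph_offdiag_cong:
  "(\<And>q. q \<in> grid N0 \<Longrightarrow> u q = v q) \<Longrightarrow> p \<in> grid N0 \<Longrightarrow> laph_offdiag N0 u p = laph_offdiag N0 v p"
  by (simp add: laph_offdiag_def shp_in_grid shm_in_grid)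

lemma laph_offdiag_nonneg:
  "(\<And>q. q \<in> grid N0 \<Longrightarrow> u q \<ge> 0) \<Longrightarrow> p \<in> grid N0 \<Longrightarrow> laph_offdiag N0 u p \<ge> 0"
  unfolding laph_offdiag_def
  by (intro mult_nonneg_nonneg sum_nonneg add_nonneg_nonneg) (auto simp: shp_in_grid shm_in_grid)

lemma laph_offdiag_sum:
  "laph_offdiag N0 (\<lambda>x. \<Sum>j\<in>J. g j * w j x) p = (\<Sum>j\<in>J. g j * laph_offdiag N0 (w j) p)"
  unfolding laph_offdiag_def by (simp add: sum.distrib sum_distrib_left sum.swap[of _ J] algebra_simps)

lemma l1_grid_laph_offdiag: "l1_grid N0 (laph_offdiag N0 u) \<le> laph_center N0 * l1_grid N0 u"
proof -
  have "l1_grid N0 (laph_offdiag N0 u) \<le>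
      (\<Sum>p\<in>grid N0. real N0 * real N0 * (\<Sum>d<3. \<bar>u (shp N0 d p)\<bar> + \<bar>u (shm N0 d p)\<bar>))"
    unfolding l1_grid_def laph_offdiag_def
  proof (rule sum_mono)
    fix p
    have "\<bar>\<Sum>d<3. u (shp N0 d p) + u (shm N0 d p)\<bar> \<le> (\<Sum>d<3. \<bar>u (shp N0 d p)\<bar> + \<bar>u (shm N0 d p)\<bar>)"
      by (intro order_trans[OF sum_abs] sum_mono abs_triangle_ineq)
    then show "\<bar>real N0 * real N0 * (\<Sum>d<3. u (shp N0 d p) + u (shm N0 d p))\<bar>
        \<le> real N0 * real N0 * (\<Sum>d<3. \<bar>u (shp N0 d p)\<bar> + \<bar>u (shm N0 d p)\<bar>)"
      by (simp add: abs_mult mult_left_mono)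
  qed
  also have "\<dots> = real N0 * real N0 *
      (\<Sum>d<3. (\<Sum>p\<in>grid N0. \<bar>u (shp N0 d p)\<bar>) + (\<Sum>p\<in>grid N0. \<bar>u (shm N0 d p)\<bar>))"
    by (simp add: sum_distrib_left[symmetric] sum.distrib sum.swap[of _ "grid N0"])
  also have "\<dots> = laph_center N0 * l1_grid N0 u"
    by (simp add: sum_grid_shp[of "\<lambda>q. \<bar>u q\<bar>"] sum_grid_shm[of "\<lambda>q. \<bar>u q\<bar>"] l1_grid_def laph_center_def)
  finally show ?thesis .
qed

lemma funpow_laph_cong:
  "(\<And>q. q \<in> grid N0 \<Longrightarrow> u q = v q) \<Longrightarrow> p \<in> grid N0 \<Longrightarrow> (laph N0 ^^ m) u p = (laph N0 ^^ m) v p"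
proof (induction m arbitrary: p)
  case (Suc m)
  then show ?case by (simp add: laph_eq_offdiag laph_offdiag_cong[of N0 "(laph N0 ^^ m) u" "(laph N0 ^^ m) v"])
qed simp

lemma funpow_laph_offdiag_nonneg:
  "(\<And>q. q \<in> grid N0 \<Longrightarrow> u q \<ge> 0) \<Longrightarrow> p \<in> grid N0 \<Longrightarrow> (laph_offdiag N0 ^^ m) u p \<ge> 0"
  by (induction m arbitrary: p) (simp_all add: laph_offdiag_nonneg)

lemma l1_grid_funpow_laph_offdiag:
  "l1_grid N0 ((laph_offdiag N0 ^^ j) u) \<le> laph_center N0 ^ j * l1_grid N0 u"
proof (induction j)
  case (Suc j)
  have "l1_grid N0 ((laph_offdiag N0 ^^ Suc j) u) \<le> laph_center N0 * l1_grid N0 ((laph_offdiag N0 ^^ j) u)"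
    by (simp add: l1_grid_laph_offdiag)
  also have "\<dots> \<le> laph_center N0 * (laph_center N0 ^ j * l1_grid N0 u)"
    using Suc by (intro mult_left_mono) (simp_all add: laph_center_def)
  finally show ?case by (simp add: algebra_simps)
qed simp

lemma abs_le_l1_grid: "p \<in> grid N0 \<Longrightarrow> \<bar>u p\<bar> \<le> l1_grid N0 u"
  unfolding l1_grid_def by (rule member_le_sum) auto

lemma binomial_sum_Suc:
  fixes a :: "nat \<Rightarrow> real"
  shows "(\<Sum>j\<le>m. real (m choose j) * s ^ (m - j) * a (Suc j)) + s * (\<Sum>j\<le>m. real (m choose j) * s ^ (m - j) * a j)
       = (\<Sum>j\<le>Suc m. real (Suc m choose j) * s ^ (Suc m - j) * a j)"
proof -
  have "(\<Sum>j\<le>Suc m. real (Suc m choose j) * s ^ (Suc m - j) * a j) =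
     s ^ Suc m * a 0 + (\<Sum>i\<le>m. real (m choose i) * s ^ (m - i) * a (Suc i))
       + (\<Sum>i<m. real (m choose Suc i) * s ^ (m - i) * a (Suc i))"
  proof -
    have "(\<Sum>j\<le>Suc m. real (Suc m choose j) * s ^ (Suc m - j) * a j) =
        s ^ Suc m * a 0 + (\<Sum>i\<le>m. real (m choose i) * s ^ (m - i) * a (Suc i))
          + (\<Sum>i\<le>m. real (m choose Suc i) * s ^ (m - i) * a (Suc i))"
      by (subst sum.atMost_shift) (simp only: lessThan_Suc_atMost binomial_Suc_Suc of_nat_add,
          simp add: sum.distrib algebra_simps)
    then show ?thesis by (simp add: lessThan_Suc_atMost[symmetric])
  qed
  moreover have "s * (\<Sum>j\<le>m. real (m choose j) * s ^ (m - j) * a j) =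
      (\<Sum>j\<le>m. real (m choose j) * s ^ (Suc m - j) * a j)"
    by (simp add: sum_distrib_left algebra_simps Suc_diff_le)
  moreover have "\<dots> = s ^ Suc m * a 0 + (\<Sum>i<m. real (m choose Suc i) * s ^ (m - i) * a (Suc i))"
    by (simp add: sum.atMost_shift)
  ultimately show ?thesis by simp
qed

lemma funpow_laph_binomial:
  "p \<in> grid N0 \<Longrightarrow> (laph N0 ^^ m) u p =
     (\<Sum>j\<le>m. real (m choose j) * (- laph_center N0) ^ (m - j) * (laph_offdiag N0 ^^ j) u p)"
proof (induction m arbitrary: p)
  case (Suc m)
  have "laph_offdiag N0 ((laph N0 ^^ m) u) p =
      laph_offdiag N0 (\<lambda>x. \<Sum>j\<le>m. (real (m choose j) * (- laph_center N0) ^ (m - j)) * (laph_offdiag N0 ^^ j) u x) p"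
    by (rule laph_offdiag_cong[OF _ Suc.prems]) (simp add: Suc.IH mult.assoc)
  also have "\<dots> = (\<Sum>j\<le>m. real (m choose j) * (- laph_center N0) ^ (m - j) * (laph_offdiag N0 ^^ Suc j) u p)"
    by (simp add: laph_offdiag_sum)
  finally have "(laph N0 ^^ Suc m) u p = \<dots> + (- laph_center N0) * (laph N0 ^^ m) u p"
    using Suc.prems by (simp add: laph_eq_offdiag)
  also have "\<dots> = (\<Sum>j\<le>Suc m. real (Suc m choose j) * (- laph_center N0) ^ (Suc m - j) * (laph_offdiag N0 ^^ j) u p)"
    unfolding Suc.IH[OF Suc.prems] by (rule binomial_sum_Suc[where a="\<lambda>j. (laph_offdiag N0 ^^ j) u p"])
  finally show ?case .
qed simp

lemma exp_series_summable: "summable (\<lambda>n. x ^ n / fact n)" for x :: real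
  using summable_exp[of x] by (simp add: field_simps)

lemma summable_norm_laph_offdiag_series:
  assumes t: "t \<ge> 0" and p: "p \<in> grid N0"
  shows "summable (\<lambda>j. norm (t ^ j / fact j * (laph_offdiag N0 ^^ j) u p))"
proof (rule summable_comparison_test[OF _ summable_mult2[OF exp_series_summable]])
  show "\<exists>N. \<forall>j\<ge>N. norm (norm (t ^ j / fact j * (laph_offdiag N0 ^^ j) u p))
      \<le> (laph_center N0 * t) ^ j / fact j * l1_grid N0 u"
  proof (intro exI allI impI)
    fix j
    have "\<bar>(laph_offdiag N0 ^^ j) u p\<bar> \<le> laph_center N0 ^ j * l1_grid N0 u"
      using abs_le_l1_grid[OF p] l1_grid_funpow_laph_offdiag order_trans by blast
    then have "t ^ j / fact j * \<bar>(laph_offdiag N0 ^^ j) u p\<bar> \<le> t ^ j / fact j * (laph_center N0 ^ j * l1_grid N0 u)"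
      using t by (intro mult_left_mono) auto
    then show "norm (norm (t ^ j / fact j * (laph_offdiag N0 ^^ j) u p))
        \<le> (laph_center N0 * t) ^ j / fact j * l1_grid N0 u"
      using t by (simp add: abs_mult power_mult_distrib field_simps)
  qed
qed

lemma heat_series_term_cauchy:
  assumes p: "p \<in> grid N0"
  shows "t ^ k / fact k * (laph N0 ^^ k) u p = (\<Sum>i\<le>k. t ^ i / fact i * (laph_offdiag N0 ^^ i) u p *
    ((- laph_center N0 * t) ^ (k - i) / fact (k - i)))"
proof -
  have "t ^ k / fact k * (laph N0 ^^ k) u p = (\<Sum>i\<le>k. t ^ k / fact k *
      (real (k choose i) * (- laph_center N0) ^ (k - i) * (laph_offdiag N0 ^^ i) u p))"
    by (simp add: funpow_laph_binomial[OF p] sum_distrib_left)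
  also have "\<dots> = (\<Sum>i\<le>k. t ^ i / fact i * (laph_offdiag N0 ^^ i) u p *
      ((- laph_center N0 * t) ^ (k - i) / fact (k - i)))"
  proof (rule sum.cong[OF refl])
    fix i assume "i \<in> {..k}"
    then have ik: "i \<le> k" by simp
    have tk: "t ^ k = t ^ i * t ^ (k - i)" using ik by (simp flip: power_add)
    show "t ^ k / fact k * (real (k choose i) * (- laph_center N0) ^ (k - i) * (laph_offdiag N0 ^^ i) u p)
        = t ^ i / fact i * (laph_offdiag N0 ^^ i) u p * ((- laph_center N0 * t) ^ (k - i) / fact (k - i))"
      unfolding binomial_fact[OF ik] tk power_mult_distrib by (simp add: field_simps)
  qed
  finally show ?thesis .
qed

text \<open>
  Writing \<open>\<Delta>\<^sub>h = A - c I\<close> with \<open>A\<close> = \<open>laph_offdiag\<close> entrywise nonnegative, the Cauchy product of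
  the series for \<open>exp (t A)\<close> and \<open>exp (- c t)\<close> gives \<open>exp (t \<Delta>\<^sub>h) = exp (- c t) exp (t A)\<close>.
\<close>

lemma heat_exp_series_factor:
  assumes t: "t \<ge> 0" and p: "p \<in> grid N0"
  shows "(\<lambda>m. t ^ m / fact m * (laph N0 ^^ m) u p) sums
          ((\<Sum>j. t ^ j / fact j * (laph_offdiag N0 ^^ j) u p) * exp (- laph_center N0 * t))"
proof -
  define a where "a = (\<lambda>j. t ^ j / fact j * (laph_offdiag N0 ^^ j) u p)"
  define b where "b = (\<lambda>k. (- laph_center N0 * t) ^ k / fact k)"
  have sb: "summable (\<lambda>k. norm (b k))"
    using exp_series_summable[of "laph_center N0 * t"] t
    by (simp add: b_def norm_divide norm_power abs_mult laph_center_def)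
  have "(\<lambda>k. \<Sum>i\<le>k. a i * b (k - i)) sums (suminf a * suminf b)"
    using Cauchy_product_sums[OF summable_norm_laph_offdiag_series[OF t p] sb] by (simp add: a_def)
  moreover have "suminf b = exp (- laph_center N0 * t)"
    using exp_converges[of "- laph_center N0 * t"] by (simp add: b_def sums_iff field_simps)
  moreover have "(\<lambda>k. \<Sum>i\<le>k. a i * b (k - i)) = (\<lambda>m. t ^ m / fact m * (laph N0 ^^ m) u p)"
    by (rule ext) (simp only: a_def b_def heat_series_term_cauchy[OF p])
  ultimately show ?thesis
    by (simp only: a_def)
qed

lemma heat_exp_eq_factor:
  assumes "t \<ge> 0" and "p \<in> grid N0"
  shows "heat_exp N0 t u p = (\<Sum>j. t ^ j / fact j * (laph_offdiag N0 ^^ j) u p) * exp (- laph_center N0 * t)"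
    and "summable (\<lambda>m. t ^ m / fact m * (laph N0 ^^ m) u p)"
  using heat_exp_series_factor[OF assms, of u] by (auto simp: heat_exp_def sums_iff)

lemma heat_exp_lower_bound:
  assumes t: "t \<ge> 0" and p: "p \<in> grid N0" and u: "\<And>q. q \<in> grid N0 \<Longrightarrow> u q \<ge> 0"
  shows "heat_exp N0 t u p \<ge> exp (- laph_center N0 * t) * u p"
proof -
  have "(\<Sum>j\<in>{0}. t ^ j / fact j * (laph_offdiag N0 ^^ j) u p) \<le> (\<Sum>j. t ^ j / fact j * (laph_offdiag N0 ^^ j) u p)"
    by (rule sum_le_suminf[OF summable_norm_cancel[OF summable_norm_laph_offdiag_series[OF t p]]])
      (use t funpow_laph_offdiag_nonneg[OF u p] in auto)
  then show ?thesis unfolding heat_exp_eq_factor(1)[OF t p] by (simp add: mult.commute)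
qed

lemma heat_exp_pos:
  assumes "t \<ge> 0" and "p \<in> grid N0" and "\<forall>q\<in>grid N0. u q > 0"
  shows "heat_exp N0 t u p > 0"
proof -
  have "exp (- laph_center N0 * t) * u p > 0" using assms by simp
  also have "\<dots> \<le> heat_exp N0 t u p"
    using assms by (intro heat_exp_lower_bound) (auto intro: less_imp_le)
  finally show ?thesis .
qed

lemma laph_linear: "laph N0 (\<lambda>x. a * u x + b * v x) p = a * laph N0 u p + b * laph N0 v p"
  unfolding laph_def divMgrad_def divh_def gradh_def
  by (simp add: sum_distrib_left sum.distrib[symmetric] algebra_simps add_divide_distrib diff_divide_distrib)

lemma laph_const: "laph N0 (\<lambda>x. c) p = 0"
  unfolding laph_def divMgrad_def divh_def gradh_def by simp

lemma funpow_laph_sum: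
  assumes "finite Q"
  shows "(laph N0 ^^ m) (\<lambda>x. \<Sum>q\<in>Q. g q * f q x) = (\<lambda>p. \<Sum>q\<in>Q. g q * (laph N0 ^^ m) (f q) p)"
proof -
  have laph_sum: "laph N0 (\<lambda>x. \<Sum>q\<in>Q. g q * f q x) p = (\<Sum>q\<in>Q. g q * laph N0 (f q) p)" for f p
    using assms
  proof (induction Q rule: finite_induct)
    case (insert a Q)
    then show ?case
      using laph_linear[of N0 "g a" "f a" 1 "\<lambda>x. \<Sum>q\<in>Q. g q * f q x" p] by simp
  qed (simp add: laph_const)
  show ?thesis by (induction m) (simp_all add: laph_sum)
qed

lemma funpow_laph_const: "(laph N0 ^^ m) (\<lambda>x. c) = (\<lambda>x. if m = 0 then c else 0)"
  by (induction m) (auto simp: laph_const)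

lemma heat_exp_cong:
  "p \<in> grid N0 \<Longrightarrow> (\<And>q. q \<in> grid N0 \<Longrightarrow> u q = v q) \<Longrightarrow> heat_exp N0 t u p = heat_exp N0 t v p"
  unfolding heat_exp_def using funpow_laph_cong by metis

lemma heat_exp_sum:
  assumes t: "t \<ge> 0" and p: "p \<in> grid N0" and Q: "finite Q"
  shows "heat_exp N0 t (\<lambda>x. \<Sum>q\<in>Q. g q * f q x) p = (\<Sum>q\<in>Q. g q * heat_exp N0 t (f q) p)"
proof -
  have "heat_exp N0 t (\<lambda>x. \<Sum>q\<in>Q. g q * f q x) p
      = (\<Sum>m. \<Sum>q\<in>Q. g q * (t ^ m / fact m * (laph N0 ^^ m) (f q) p))"
    unfolding heat_exp_def funpow_laph_sum[OF Q] by (simp add: sum_distrib_left algebra_simps)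
  also have "\<dots> = (\<Sum>q\<in>Q. \<Sum>m. g q * (t ^ m / fact m * (laph N0 ^^ m) (f q) p))"
    by (rule suminf_sum) (intro summable_mult heat_exp_eq_factor(2)[OF t p])
  also have "\<dots> = (\<Sum>q\<in>Q. g q * heat_exp N0 t (f q) p)"
    unfolding heat_exp_def by (intro sum.cong refl suminf_mult heat_exp_eq_factor(2)[OF t p])
  finally show ?thesis .
qed

lemma heat_exp_kernel:
  assumes t: "t \<ge> 0" and p: "p \<in> grid N0"
  shows "heat_exp N0 t u p = (\<Sum>q\<in>grid N0. u q * heat_exp N0 t (indicator {q}) p)"
proof -
  have "heat_exp N0 t u p = heat_exp N0 t (\<lambda>x. \<Sum>q\<in>grid N0. u q * indicator {q} x) p"
    by (rule heat_exp_cong[OF p]) (simp add: indicator_def)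
  also have "\<dots> = (\<Sum>q\<in>grid N0. u q * heat_exp N0 t (indicator {q}) p)"
    by (rule heat_exp_sum[OF t p finite_grid])
  finally show ?thesis .
qed

lemma heat_exp_const_one: "heat_exp N0 t (\<lambda>x. 1) p = 1"
proof -
  have "(\<lambda>m. t ^ m / fact m * (laph N0 ^^ m) (\<lambda>x. 1) p) = (\<lambda>m. if m = 0 then 1 else 0)"
    by (auto simp: funpow_laph_const)
  then show ?thesis
    unfolding heat_exp_def using sums_single[of 0 "\<lambda>_. 1::real"] by (simp add: sums_iff)
qed

lemma heat_kernel_nonneg:
  "t \<ge> 0 \<Longrightarrow> p \<in> grid N0 \<Longrightarrow> heat_exp N0 t (indicator {q}) p \<ge> 0"
  using heat_exp_lower_bound[of t p N0 "indicator {q}"] by (simp add: order_trans[rotated])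

lemma heat_kernel_row_sum:
  "t \<ge> 0 \<Longrightarrow> p \<in> grid N0 \<Longrightarrow> (\<Sum>q\<in>grid N0. heat_exp N0 t (indicator {q}) p) = 1"
  using heat_exp_kernel[of t p N0 "\<lambda>x. 1"] heat_exp_const_one[of N0 t p] by simp

text \<open>Column sums are the total mass of \<open>exp (t \<Delta>\<^sub>h) \<delta>\<^sub>q\<close>, which is conserved since \<open>\<Delta>\<^sub>h\<close> is in divergence form.\<close>

lemma heat_kernel_column_sum:
  assumes t: "t \<ge> 0" and q: "q \<in> grid N0"
  shows "(\<Sum>p\<in>grid N0. heat_exp N0 t (indicator {q}) p) = 1"
proof -
  have mass: "(\<Sum>p\<in>grid N0. t ^ m / fact m * (laph N0 ^^ m) (indicator {q}) p) = (if m = 0 then 1 else 0)" for m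
  proof (cases m)
    case 0
    then show ?thesis using q by (simp add: indicator_def)
  next
    case (Suc k)
    have "(\<Sum>p\<in>grid N0. (laph N0 ^^ m) (indicator {q}) p) = 0"
      using Suc by (simp add: laph_def sum_divMgrad_eq_0)
    then show ?thesis
      using Suc by (simp only: sum_distrib_left[symmetric]) simp
  qed
  have "(\<Sum>p\<in>grid N0. heat_exp N0 t (indicator {q}) p)
      = (\<Sum>m. \<Sum>p\<in>grid N0. t ^ m / fact m * (laph N0 ^^ m) (indicator {q}) p)"
    unfolding heat_exp_def by (rule suminf_sum[symmetric]) (use heat_exp_eq_factor(2)[OF t] in auto)
  also have "\<dots> = 1"
    unfolding mass using sums_single[of 0 "\<lambda>_. 1::real"] by (simp add: sums_iff)
  finally show ?thesis .
qed

text \<open>The heat kernel is doubly stochastic, so Jensen's inequality for the convex \<open>Fi\<close> applies pointwise.\<close>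

lemma heat_exp_energy_decay:
  assumes t: "t \<ge> 0" and N0: "N0 \<ge> 1" and pos: "\<forall>q\<in>grid N0. u q > 0"
  shows "(\<Sum>p\<in>grid N0. Fi Ui (heat_exp N0 t u p)) \<le> (\<Sum>p\<in>grid N0. Fi Ui (u p))"
proof -
  have "(\<Sum>p\<in>grid N0. Fi Ui (heat_exp N0 t u p)) \<le>
        (\<Sum>p\<in>grid N0. \<Sum>q\<in>grid N0. heat_exp N0 t (indicator {q}) p * Fi Ui (u q))"
  proof (rule sum_mono)
    fix p assume p: "p \<in> grid N0"
    have "Fi Ui (\<Sum>q\<in>grid N0. heat_exp N0 t (indicator {q}) p *\<^sub>R u q)
        \<le> (\<Sum>q\<in>grid N0. heat_exp N0 t (indicator {q}) p * Fi Ui (u q))"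
      using heat_kernel_row_sum[OF t p] heat_kernel_nonneg[OF t p] pos
      by (intro convex_on_sum[OF finite_grid grid_nonempty[OF N0] convex_on_Fi]) auto
    then show "Fi Ui (heat_exp N0 t u p) \<le> (\<Sum>q\<in>grid N0. heat_exp N0 t (indicator {q}) p * Fi Ui (u q))"
      using heat_exp_kernel[OF t p, of u] by (simp add: mult.commute)
  qed
  also have "\<dots> = (\<Sum>q\<in>grid N0. Fi Ui (u q) * (\<Sum>p\<in>grid N0. heat_exp N0 t (indicator {q}) p))"
    by (subst sum.swap) (simp add: sum_distrib_left mult.commute)
  also have "\<dots> = (\<Sum>q\<in>grid N0. Fi Ui (u q))"
    using heat_kernel_column_sum[OF t] by simp
  finally show ?thesis .
qed

section \<open>Diffusion step\<close>

lemma diffusion_step_exists: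
  assumes "N0 \<ge> 1" and "\<tau> > 0" and "\<forall>\<rho>>0. Di \<rho> > 0" and "\<forall>p\<in>grid N0. \<rho>n p > 0"
  shows "\<exists>\<rho>1. diffusion_step N0 Di Ui \<tau> \<rho>n \<rho>1"
  using diffusion_nl_exists[OF assms] by (auto simp: diffusion_step_def)

lemma diffusion_step_energy_decay:
  assumes N0: "N0 \<ge> 1" and tau: "\<tau> > 0" and D: "\<forall>\<rho>>0. Di \<rho> > 0"
    and pos: "\<forall>p\<in>grid N0. \<rho>n p > 0" and step: "diffusion_step N0 Di Ui \<tau> \<rho>n \<rho>1"
  shows "\<forall>p\<in>grid N0. \<rho>1 p > 0"
    and "(\<Sum>p\<in>grid N0. Fi Ui (\<rho>1 p)) \<le> (\<Sum>p\<in>grid N0. Fi Ui (\<rho>n p))"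
proof -
  have "(\<forall>p\<in>grid N0. \<rho>1 p > 0) \<and> (\<Sum>p\<in>grid N0. Fi Ui (\<rho>1 p)) \<le> (\<Sum>p\<in>grid N0. Fi Ui (\<rho>n p))"
  proof (cases "diff_const Di")
    case True
    then have eq: "\<forall>p\<in>grid N0. \<rho>1 p = heat_exp N0 (Di 1 * \<tau>) \<rho>n p"
      using step by (simp add: diffusion_step_def)
    have t: "Di 1 * \<tau> \<ge> 0" using D tau by (simp add: less_imp_le)
    show ?thesis
      using heat_exp_energy_decay[OF t N0 pos, of Ui] heat_exp_pos[OF t _ pos] eq by simp
  next
    case False
    then show ?thesis
      using diffusion_nl_energy_decay[OF tau D pos] step by (simp add: diffusion_step_def)
  qed
  then show "\<forall>p\<in>grid N0. \<rho>1 p > 0" "(\<Sum>p\<in>grid N0. Fi Ui (\<rho>1 p)) \<le> (\<Sum>p\<in>grid N0. Fi Ui (\<rho>n p))"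
    by auto
qed

lemma diffusion_step_unique:
  assumes "\<tau> > 0" and "\<forall>\<rho>>0. Di \<rho> > 0"
    and "\<forall>p\<in>grid N0. \<rho>n p > 0" and agree: "\<forall>p\<in>grid N0. \<rho>n' p = \<rho>n p"
    and step: "diffusion_step N0 Di Ui \<tau> \<rho>n \<rho>1" and step': "diffusion_step N0 Di Ui \<tau> \<rho>n' \<rho>1'"
  shows "\<forall>p\<in>grid N0. \<rho>1 p = \<rho>1' p"
proof (cases "diff_const Di")
  case True
  then show ?thesis
    using step step' heat_exp_cong[of _ N0 \<rho>n \<rho>n'] agree by (simp add: diffusion_step_def)
next
  case False
  then show ?thesis
    using step diffusion_nl_cong[OF agree] step' diffusion_nl_unique[OF assms(1-3)]
    by (simp add: diffusion_step_def)
qed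

section \<open>Reaction step\<close>

definition feasible_extent :: "'i set \<Rightarrow> ('i \<Rightarrow> real) \<Rightarrow> ('i \<Rightarrow> real) \<Rightarrow> real \<Rightarrow> bool" where
  "feasible_extent I s c x \<longleftrightarrow> (\<forall>i\<in>I. 0 < c i + s i * x)"

definition reaction_drive :: "'i set \<Rightarrow> ('i \<Rightarrow> real) \<Rightarrow> ('i \<Rightarrow> real) \<Rightarrow> ('i \<Rightarrow> real) \<Rightarrow> real \<Rightarrow> real" where
  "reaction_drive I s U c x = (\<Sum>i\<in>I. s i * (ln (c i + s i * x) + U i))"

lemma feasible_extent_0: "\<forall>i\<in>I. c i > 0 \<Longrightarrow> feasible_extent I s c 0"
  by (simp add: feasible_extent_def)

lemma feasible_extent_between:
  assumes "feasible_extent I s c x" "feasible_extent I s c y" "x \<le> z" "z \<le> y"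
  shows "feasible_extent I s c z"
  unfolding feasible_extent_def
proof
  fix i assume i: "i \<in> I"
  have "s i * x \<le> s i * z \<or> s i * y \<le> s i * z"
    using assms(3,4) by (cases "s i \<ge> 0") (auto intro: mult_left_mono mult_left_mono_neg)
  then show "0 < c i + s i * z"
    using assms(1,2) i unfolding feasible_extent_def by force
qed

lemma open_feasible_extent:
  assumes "finite I"
  shows "open {x. feasible_extent I s c x}"
proof -
  have "{x. feasible_extent I s c x} = (\<Inter>i\<in>I. {x. 0 < c i + s i * x})"
    by (auto simp: feasible_extent_def)
  moreover have "open {x. 0 < c i + s i * x}" for i
    by (rule open_Collect_less) (auto intro!: continuous_intros)
  ultimately show ?thesis using assms by (auto intro!: open_INT)
qed

lemma connected_feasible_extent: "connected {x. feasible_extent I s c x}"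
  unfolding connected_iff_interval using feasible_extent_between by blast

lemma drive_term_mono:
  fixes c s x y :: real
  assumes "0 < c + s * x" "0 < c + s * y" "x \<le> y"
  shows "s * (ln (c + s * x) + u) \<le> s * (ln (c + s * y) + u)"
proof (cases "s \<ge> 0")
  case True
  then have "ln (c + s * x) \<le> ln (c + s * y)" using assms by (simp add: mult_left_mono)
  with True show ?thesis by (simp add: mult_left_mono)
next
  case False
  then have "ln (c + s * y) \<le> ln (c + s * x)" using assms by (simp add: mult_left_mono_neg)
  with False show ?thesis by (simp add: mult_left_mono_neg)
qed

lemma reaction_drive_mono:
  "feasible_extent I s c x \<Longrightarrow> feasible_extent I s c y \<Longrightarrow> x \<le> y \<Longrightarrow>
     reaction_drive I s U c x \<le> reaction_drive I s U c y"
  unfolding reaction_drive_def feasible_extent_def by (intro sum_mono drive_term_mono) auto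

lemma continuous_on_reaction_drive:
  "S \<subseteq> {x. feasible_extent I s c x} \<Longrightarrow> continuous_on S (reaction_drive I s U c)"
  unfolding reaction_drive_def feasible_extent_def
  by (intro continuous_intros) (fastforce simp: subset_iff)+

lemma has_real_derivative_reaction_energy:
  assumes "feasible_extent I s c x"
  shows "((\<lambda>x. \<Sum>i\<in>I. Fi (U i) (c i + s i * x)) has_real_derivative reaction_drive I s U c x) (at x)"
  unfolding reaction_drive_def
proof (rule DERIV_sum)
  fix i assume "i \<in> I"
  then have pos: "c i + s i * x > 0" using assms by (simp add: feasible_extent_def)
  have "((\<lambda>x. c i + s i * x) has_real_derivative s i) (at x)"
    by (auto intro!: derivative_eq_intros)
  from DERIV_chain2[OF has_real_derivative_Fi[OF pos] this]
  show "((\<lambda>x. Fi (U i) (c i + s i * x)) has_real_derivative s i * (ln (c i + s i * x) + U i)) (at x)"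
    by (simp add: mult.commute)
qed

lemma reaction_drive_le_single_term:
  assumes "finite I" "k \<in> I" "\<forall>i\<in>I. c i > 0" "feasible_extent I s c x" "x \<le> 0"
  shows "reaction_drive I s U c x \<le>
    s k * (ln (c k + s k * x) + U k) + (\<Sum>i\<in>I - {k}. s i * (ln (c i) + U i))"
proof -
  have "(\<Sum>i\<in>I - {k}. s i * (ln (c i + s i * x) + U i)) \<le> (\<Sum>i\<in>I - {k}. s i * (ln (c i + s i * 0) + U i))"
    using assms by (intro sum_mono drive_term_mono) (auto simp: feasible_extent_def)
  then show ?thesis
    unfolding reaction_drive_def using assms(1,2) by (simp add: sum.remove)
qed

text \<open>
  Towards the left end of the feasible interval some product concentration \<open>c\<^sub>k + s\<^sub>k x\<close> tends to
  zero, and its term \<open>s\<^sub>k ln (c\<^sub>k + s\<^sub>k x)\<close> drives \<open>reaction_drive\<close> to \<open>-\<infinity>\<close>.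
\<close>

lemma reaction_drive_unbounded_left:
  assumes I: "finite I" and c: "\<forall>i\<in>I. c i > 0" and j: "j \<in> I" "s j > 0"
  obtains a where "a < 0" "\<forall>x\<in>{a<..0}. feasible_extent I s c x"
    "\<forall>K. \<exists>x\<in>{a<..0}. reaction_drive I s U c x < K"
proof -
  define P where "P = {i\<in>I. s i > 0}"
  define a where "a = Max ((\<lambda>i. - c i / s i) ` P)"
  have P: "finite P" "P \<noteq> {}" using I j by (auto simp: P_def)
  have a_ge: "- c i / s i \<le> a" if "i \<in> P" for i
    unfolding a_def using P that by auto
  have "a \<in> (\<lambda>i. - c i / s i) ` P"
    unfolding a_def using P by (intro Max_in) auto
  then obtain k where k: "k \<in> P" "a = - c k / s k" by blast
  have "k \<in> I" and sk: "s k > 0" and ck: "c k > 0" using k c by (auto simp: P_def)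
  have "a < 0" using k sk ck by simp
  have feasible: "feasible_extent I s c x" if "x \<in> {a<..0}" for x
    unfolding feasible_extent_def
  proof
    fix i assume i: "i \<in> I"
    show "0 < c i + s i * x"
    proof (cases "s i > 0")
      case True
      then have "- c i / s i < x" using a_ge[of i] i that by (auto simp: P_def)
      with True show ?thesis by (simp add: field_simps)
    next
      case False
      then have "s i * x \<ge> 0" using that by (simp add: mult_nonpos_nonpos)
      with c i show ?thesis by (simp add: add_pos_nonneg)
    qed
  qed
  have "\<exists>x\<in>{a<..0}. reaction_drive I s U c x < K" for K
  proof -
    define C where "C = (\<Sum>i\<in>I - {k}. s i * (ln (c i) + U i))"
    define L where "L = (K - 1 - s k * U k - C) / s k"
    define \<epsilon> where "\<epsilon> = min (c k) (exp L)"
    define x where "x = (\<epsilon> - c k) / s k"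
    have \<epsilon>: "0 < \<epsilon>" "\<epsilon> \<le> c k" using ck by (auto simp: \<epsilon>_def)
    have "ln \<epsilon> \<le> ln (exp L)"
      using \<epsilon> by (subst ln_le_cancel_iff) (auto simp: \<epsilon>_def)
    then have "s k * ln \<epsilon> \<le> K - 1 - s k * U k - C"
      using mult_left_mono[of "ln \<epsilon>" L "s k"] sk by (simp add: L_def)
    moreover have x: "x \<in> {a<..0}" and "c k + s k * x = \<epsilon>"
      using \<epsilon> sk k(2) by (auto simp: x_def field_simps)
    moreover note reaction_drive_le_single_term[OF I \<open>k \<in> I\<close> c feasible[OF x], of U]
    ultimately have "reaction_drive I s U c x < K" by (simp add: C_def algebra_simps)
    with x show ?thesis by blast
  qed
  with \<open>a < 0\<close> feasible that show ?thesis by blast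
qed

lemma reaction_drive_unbounded_right:
  assumes I: "finite I" and c: "\<forall>i\<in>I. c i > 0" and j: "j \<in> I" "s j < 0"
  obtains b where "b > 0" "\<forall>x\<in>{0..<b}. feasible_extent I s c x"
    "\<forall>K. \<exists>x\<in>{0..<b}. reaction_drive I s U c x > K"
proof -
  have reflect: "feasible_extent I (\<lambda>i. - s i) c (- x) \<longleftrightarrow> feasible_extent I s c x"
    "reaction_drive I (\<lambda>i. - s i) U c (- x) = - reaction_drive I s U c x" for x
    by (simp_all add: feasible_extent_def reaction_drive_def sum_negf)
  obtain a where a: "a < 0" "\<forall>x\<in>{a<..0}. feasible_extent I (\<lambda>i. - s i) c x"
    "\<forall>K. \<exists>x\<in>{a<..0}. reaction_drive I (\<lambda>i. - s i) U c x < K"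
    using reaction_drive_unbounded_left[OF I c j(1), of "\<lambda>i. - s i" U] j(2) by auto
  show ?thesis
  proof (rule that[of "- a"])
    show "- a > 0" using a(1) by simp
    show "\<forall>x\<in>{0..<- a}. feasible_extent I s c x"
      using a(2) reflect(1) by (metis add.inverse_inverse greaterThanAtMost_iff atLeastLessThan_iff neg_0_le_iff_le neg_less_iff_less)
    show "\<forall>K. \<exists>x\<in>{0..<- a}. reaction_drive I s U c x > K"
    proof
      fix K
      obtain x where "x \<in> {a<..0}" "reaction_drive I (\<lambda>i. - s i) U c x < - K" using a(3) by blast
      then show "\<exists>x\<in>{0..<- a}. reaction_drive I s U c x > K"
        using reflect(2)[of "- x"] by (intro bexI[of _ "- x"]) auto
    qed
  qed
qed

lemma shifted_ln_arg_pos_iff: "\<kappa> > 0 \<Longrightarrow> x / \<kappa> + 1 > 0 \<longleftrightarrow> - \<kappa> < (x::real)"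
  by (auto simp: field_simps)

lemma mult_ln_shift_nonneg:
  fixes \<kappa> R :: real
  assumes "\<kappa> > 0" "- \<kappa> < R"
  shows "0 \<le> R * ln (R / \<kappa> + 1)"
proof (cases "R \<ge> 0")
  case True
  then show ?thesis using assms by simp
next
  case False
  then have "ln (R / \<kappa> + 1) \<le> 0"
    using assms by (simp add: shifted_ln_arg_pos_iff divide_nonpos_pos)
  with False show ?thesis by (simp add: mult_nonpos_nonpos)
qed

lemma log_shift_strict_mono:
  fixes \<kappa> :: real
  assumes "\<kappa> > 0" "- \<kappa> < x" "x < y"
  shows "ln (x / \<kappa> + 1) < ln (y / \<kappa> + 1)"
proof -
  have "0 < x / \<kappa> + 1" using assms by (simp add: field_simps)
  moreover have "x / \<kappa> < y / \<kappa>" using assms by (simp add: divide_strict_right_mono)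
  ultimately show ?thesis by simp
qed

lemma log_drive_negative_somewhere:
  assumes I: "finite I" and c: "\<forall>i\<in>I. c i > 0" and j: "j \<in> I" "s j > 0"
    and \<kappa>: "\<kappa> > 0" and \<theta>: "\<theta> > 0"
  obtains x where "feasible_extent I s c x" "- \<kappa> < x" "x \<le> 0"
    "ln (x / \<kappa> + 1) + \<theta> * reaction_drive I s U c x + E < 0"
proof -
  define d where "d = reaction_drive I s U c"
  obtain a where a: "a < 0" "\<forall>x\<in>{a<..0}. feasible_extent I s c x" "\<forall>K. \<exists>x\<in>{a<..0}. d x < K"
    using reaction_drive_unbounded_left[where s=s and U=U, OF I c j] unfolding d_def by blast
  show ?thesis
  proof (cases "a \<le> - \<kappa>")
    case True
    define K where "K = \<bar>\<theta> * d 0 + E\<bar> + 1"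
    define x where "x = \<kappa> * (exp (- K) - 1)"
    have "exp (- K) < 1" by (simp add: K_def)
    then have x: "- \<kappa> < x" "x < 0" using \<kappa> by (simp_all add: x_def mult_pos_neg algebra_simps)
    then have fx: "feasible_extent I s c x" using a(2) True by auto
    have "\<theta> * d x \<le> \<theta> * d 0"
      using reaction_drive_mono[OF fx feasible_extent_0[OF c]] x \<theta> by (simp add: d_def)
    moreover have "ln (x / \<kappa> + 1) = - K" using \<kappa> by (simp add: x_def)
    ultimately have "ln (x / \<kappa> + 1) + \<theta> * d x + E < 0" unfolding K_def by linarith
    with fx x show ?thesis by (intro that) (auto simp: d_def)
  next
    case False
    obtain x where x: "x \<in> {a<..0}" "d x < - \<bar>E\<bar> / \<theta>" using a(3) by blast
    then have fx: "feasible_extent I s c x" and "- \<kappa> < x" using a(2) False by auto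
    have "ln (x / \<kappa> + 1) \<le> 0"
      using x \<open>- \<kappa> < x\<close> \<kappa> by (simp add: field_simps)
    moreover have "\<theta> * d x < - \<bar>E\<bar>" using x \<theta> by (simp add: field_simps)
    ultimately have "ln (x / \<kappa> + 1) + \<theta> * d x + E < 0" by linarith
    with fx \<open>- \<kappa> < x\<close> x show ?thesis by (intro that) (auto simp: d_def)
  qed
qed

lemma log_drive_positive_somewhere:
  assumes I: "finite I" and c: "\<forall>i\<in>I. c i > 0" and k: "k \<in> I" "s k < 0"
    and \<kappa>: "\<kappa> > 0" and \<theta>: "\<theta> > 0"
  obtains x where "feasible_extent I s c x" "0 \<le> x"
    "ln (x / \<kappa> + 1) + \<theta> * reaction_drive I s U c x + E > 0"
proof -
  obtain b where b: "b > 0" "\<forall>x\<in>{0..<b}. feasible_extent I s c x"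
    "\<forall>K. \<exists>x\<in>{0..<b}. reaction_drive I s U c x > K"
    using reaction_drive_unbounded_right[where s=s and U=U, OF I c k] by blast
  obtain x where x: "x \<in> {0..<b}" "reaction_drive I s U c x > \<bar>E\<bar> / \<theta>" using b(3) by blast
  have "ln (x / \<kappa> + 1) \<ge> 0" using x \<kappa> by simp
  moreover have "\<theta> * reaction_drive I s U c x > \<bar>E\<bar>" using x \<theta> by (simp add: field_simps)
  ultimately have "ln (x / \<kappa> + 1) + \<theta> * reaction_drive I s U c x + E > 0" by linarith
  with b(2) x show ?thesis by (intro that) auto
qed

text \<open>
  Both the predictor and the corrector equation have the form \<open>ln (x/\<kappa> + 1) + g x = 0\<close> with \<open>g\<close>
  nondecreasing and comparable to \<open>\<theta> reaction_drive + E\<close>; the left-hand side then increases strictly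
  from \<open>-\<infinity>\<close> to \<open>+\<infinity>\<close> across the feasible extents above \<open>-\<kappa>\<close>.
\<close>

lemma log_equation_unique_root:
  assumes I: "finite I" and c: "\<forall>i\<in>I. c i > 0"
    and j: "j \<in> I" "s j > 0" and k: "k \<in> I" "s k < 0"
    and \<kappa>: "\<kappa> > 0" and \<theta>: "\<theta> > 0"
    and g_cont: "continuous_on {x. feasible_extent I s c x} g"
    and g_mono: "\<And>x y. feasible_extent I s c x \<Longrightarrow> feasible_extent I s c y \<Longrightarrow> x \<le> y \<Longrightarrow> g x \<le> g y"
    and g_left: "\<And>x. feasible_extent I s c x \<Longrightarrow> x \<le> 0 \<Longrightarrow> g x \<le> \<theta> * reaction_drive I s U c x + E"
    and g_right: "\<And>x. feasible_extent I s c x \<Longrightarrow> 0 \<le> x \<Longrightarrow> \<theta> * reaction_drive I s U c x + E \<le> g x"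
  shows "\<exists>!x. feasible_extent I s c x \<and> - \<kappa> < x \<and> ln (x / \<kappa> + 1) + g x = 0"
proof -
  define h where "h x = ln (x / \<kappa> + 1) + g x" for x
  obtain a where a: "feasible_extent I s c a" "- \<kappa> < a" "a \<le> 0"
    "ln (a / \<kappa> + 1) + \<theta> * reaction_drive I s U c a + E < 0"
    using log_drive_negative_somewhere[where s=s and U=U and E=E, OF I c j \<kappa> \<theta>] by blast
  obtain b where b: "feasible_extent I s c b" "0 \<le> b"
    "ln (b / \<kappa> + 1) + \<theta> * reaction_drive I s U c b + E > 0"
    using log_drive_positive_somewhere[where s=s and U=U and E=E, OF I c k \<kappa> \<theta>] by blast
  have "h a < 0" "h b > 0"
    using a g_left[OF a(1,3)] b g_right[OF b(1,2)] by (simp_all add: h_def)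
  have ab: "{a..b} \<subseteq> {x. feasible_extent I s c x}" "{a..b} \<subseteq> {- \<kappa><..}"
    using feasible_extent_between[OF a(1) b(1)] a(2) by auto
  have "continuous_on {a..b} h"
    unfolding h_def using ab \<kappa>
    by (intro continuous_intros continuous_on_subset[OF g_cont]) (auto simp: field_simps)
  then obtain z where z: "a \<le> z" "z \<le> b" "h z = 0"
    using IVT'[of h a 0 b] \<open>h a < 0\<close> \<open>h b > 0\<close> a(3) b(2) by auto
  have h_strict: "h x < h y"
    if "feasible_extent I s c x" "feasible_extent I s c y" "- \<kappa> < x" "x < y" for x y
    using log_shift_strict_mono[OF \<kappa> that(3,4)] g_mono[OF that(1,2)] that(4) by (simp add: h_def)
  show ?thesis
  proof (rule ex_ex1I)
    show "\<exists>x. feasible_extent I s c x \<and> - \<kappa> < x \<and> ln (x / \<kappa> + 1) + g x = 0"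
      using z ab by (intro exI[of _ z]) (auto simp: h_def)
  next
    fix x y
    assume "feasible_extent I s c x \<and> - \<kappa> < x \<and> ln (x / \<kappa> + 1) + g x = 0"
      "feasible_extent I s c y \<and> - \<kappa> < y \<and> ln (y / \<kappa> + 1) + g y = 0"
    then show "x = y"
      using h_strict[of x y] h_strict[of y x] by (cases x y rule: linorder_cases) (auto simp: h_def)
  qed
qed

context
  fixes N r :: nat and \<alpha> \<beta> U :: "nat \<Rightarrow> real" and k1m :: real
  assumes r: "1 \<le> r" "r < N"
    and \<alpha>: "\<forall>i\<in>{1..r}. \<alpha> i > 0" and \<beta>: "\<forall>i\<in>{r+1..N}. \<beta> i > 0"
    and k1m: "k1m > 0"
begin

abbreviation "\<sigma> \<equiv> sig r \<alpha> \<beta>"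

lemma sig_reactant: "\<sigma> 1 < 0" "1 \<in> {1..N}"
  using \<alpha> r by (auto simp: sig_def)

lemma sig_product: "\<sigma> (r + 1) > 0" "r + 1 \<in> {1..N}"
  using \<beta> r by (auto simp: sig_def)

lemma posR_iff_feasible: "posR N r \<alpha> \<beta> c0 R \<longleftrightarrow> feasible_extent {1..N} \<sigma> c0 R"
  by (simp add: posR_def cR_def feasible_extent_def)

lemma sum_sig_muR: "(\<Sum>i=1..N. \<sigma> i * muR r \<alpha> \<beta> U c0 R i) = reaction_drive {1..N} \<sigma> U c0 R"
  by (simp add: muR_def cR_def reaction_drive_def)

lemma FR_eq: "FR N r \<alpha> \<beta> U c0 = (\<lambda>R. \<Sum>i=1..N. Fi (U i) (c0 i + \<sigma> i * R))"
  unfolding FR_def cR_def Fi_def by (simp add: mult.commute)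

lemma eta_pos:
  assumes "\<forall>i\<in>{1..N}. c i > 0"
  shows "eta N r \<beta> k1m c > 0"
proof -
  have "\<forall>i\<in>{r+1..N}. c i powr \<beta> i > 0"
    using assms r by (simp add: less_imp_neq[symmetric])
  then show ?thesis
    unfolding eta_def using k1m prod_pos[of "{r+1..N}" "\<lambda>i. c i powr \<beta> i"] by simp
qed

lemma phiR_eq_secant_slope:
  assumes "\<forall>i\<in>{1..N}. c0 i > 0"
  shows "phiR N r \<alpha> \<beta> U c0 R 0 = secant_slope (FR N r \<alpha> \<beta> U c0) (reaction_drive {1..N} \<sigma> U c0 0) 0 R"
  using DERIV_imp_deriv[OF has_real_derivative_reaction_energy[OF feasible_extent_0[OF assms]]]
  by (auto simp: phiR_def secant_slope_def FR_eq)

lemma phiR_mono: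
  assumes c0: "\<forall>i\<in>{1..N}. c0 i > 0"
    and "feasible_extent {1..N} \<sigma> c0 x" "feasible_extent {1..N} \<sigma> c0 y" "x \<le> y"
  shows "phiR N r \<alpha> \<beta> U c0 x 0 \<le> phiR N r \<alpha> \<beta> U c0 y 0"
  unfolding phiR_eq_secant_slope[OF c0] FR_eq
  by (rule secant_slope_mono[OF open_feasible_extent connected_feasible_extent,
        where f'="reaction_drive {1..N} \<sigma> U c0"])
    (use assms feasible_extent_0[OF c0] has_real_derivative_reaction_energy reaction_drive_mono in auto)

lemma continuous_on_phiR:
  assumes c0: "\<forall>i\<in>{1..N}. c0 i > 0"
  shows "continuous_on {x. feasible_extent {1..N} \<sigma> c0 x} (\<lambda>R. phiR N r \<alpha> \<beta> U c0 R 0)"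
  unfolding phiR_eq_secant_slope[OF c0] FR_eq
  by (rule continuous_on_secant_slope[OF open_feasible_extent])
    (use feasible_extent_0[OF c0] has_real_derivative_reaction_energy in auto)

lemma phiR_0: "\<forall>i\<in>{1..N}. c0 i > 0 \<Longrightarrow> phiR N r \<alpha> \<beta> U c0 0 0 = reaction_drive {1..N} \<sigma> U c0 0"
  by (simp add: phiR_eq_secant_slope secant_slope_def)

lemma predictor_iff:
  assumes c0: "\<forall>i\<in>{1..N}. c0 i > 0" and tau: "\<tau> > 0"
  shows "predictor N r \<alpha> \<beta> U k1m \<tau> c0 Rh \<longleftrightarrow>
    feasible_extent {1..N} \<sigma> c0 Rh \<and> - (eta N r \<beta> k1m c0 * \<tau>) < Rh \<and>
    ln (Rh / (eta N r \<beta> k1m c0 * \<tau>) + 1) + reaction_drive {1..N} \<sigma> U c0 Rh = 0"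
  unfolding predictor_def posR_iff_feasible sum_sig_muR
  using eta_pos[OF c0] tau by (auto simp: shifted_ln_arg_pos_iff)

lemma predictor_unique_exists:
  assumes c0: "\<forall>i\<in>{1..N}. c0 i > 0" and tau: "\<tau> > 0"
  shows "\<exists>!Rh. predictor N r \<alpha> \<beta> U k1m \<tau> c0 Rh"
  unfolding predictor_iff[OF c0 tau]
  by (rule log_equation_unique_root[OF _ c0 sig_product(2,1) sig_reactant(2,1), where \<theta>=1 and E=0])
    (use eta_pos[OF c0] tau continuous_on_reaction_drive[OF order_refl] reaction_drive_mono in auto)

lemma eta_predictor_half_pos:
  assumes c0: "\<forall>i\<in>{1..N}. c0 i > 0" and tau: "\<tau> > 0"
    and "predictor N r \<alpha> \<beta> U k1m \<tau> c0 Rh"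
  shows "eta N r \<beta> k1m (cR r \<alpha> \<beta> c0 (Rh / 2)) > 0"
proof -
  have f: "feasible_extent {1..N} \<sigma> c0 Rh" using assms(3) by (simp add: predictor_iff[OF c0 tau])
  have f0: "feasible_extent {1..N} \<sigma> c0 0" by (rule feasible_extent_0[OF c0])
  have "feasible_extent {1..N} \<sigma> c0 (Rh / 2)"
  proof (cases "Rh \<ge> 0")
    case True
    then show ?thesis by (intro feasible_extent_between[OF f0 f]) auto
  next
    case False
    then show ?thesis by (intro feasible_extent_between[OF f f0]) auto
  qed
  then show ?thesis by (intro eta_pos) (simp add: feasible_extent_def cR_def)
qed

lemma corrector_iff:
  assumes "eta N r \<beta> k1m (cR r \<alpha> \<beta> c0 (Rh / 2)) * \<tau> = \<kappa>" and "\<kappa> > 0"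
  shows "corrector N r \<alpha> \<beta> U k1m \<tau> c0 Rh R \<longleftrightarrow>
    feasible_extent {1..N} \<sigma> c0 R \<and> - \<kappa> < R \<and>
    ln (R / \<kappa> + 1) + (phiR N r \<alpha> \<beta> U c0 R 0
      + \<tau> * (reaction_drive {1..N} \<sigma> U c0 R - reaction_drive {1..N} \<sigma> U c0 0)) = 0"
  unfolding corrector_def Let_def posR_iff_feasible right_diff_distrib sum_subtractf sum_sig_muR
  using assms by (auto simp: shifted_ln_arg_pos_iff)

text \<open>
  The corrector residual lies between \<open>\<tau> reaction_drive + (1 - \<tau>) reaction_drive 0\<close> on either side
  of \<open>0\<close>, because the secant slope \<open>phiR R 0\<close> is monotone with value \<open>reaction_drive 0\<close> at \<open>R = 0\<close>.
\<close>

lemma corrector_unique_exists: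
  assumes c0: "\<forall>i\<in>{1..N}. c0 i > 0" and tau: "\<tau> > 0"
    and \<kappa>: "eta N r \<beta> k1m (cR r \<alpha> \<beta> c0 (Rh / 2)) * \<tau> = \<kappa>" "\<kappa> > 0"
  shows "\<exists>!R. corrector N r \<alpha> \<beta> U k1m \<tau> c0 Rh R"
proof -
  define d where "d = reaction_drive {1..N} \<sigma> U c0"
  define g where "g R = phiR N r \<alpha> \<beta> U c0 R 0 + \<tau> * (d R - d 0)" for R
  have f0: "feasible_extent {1..N} \<sigma> c0 0" by (rule feasible_extent_0[OF c0])
  have "\<exists>!R. feasible_extent {1..N} \<sigma> c0 R \<and> - \<kappa> < R \<and> ln (R / \<kappa> + 1) + g R = 0"
  proof (rule log_equation_unique_root[OF _ c0 sig_product(2,1) sig_reactant(2,1) \<kappa>(2) tau,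
        where E="(1 - \<tau>) * d 0"])
    show "continuous_on {x. feasible_extent {1..N} \<sigma> c0 x} g"
      unfolding g_def d_def by (intro continuous_intros continuous_on_phiR[OF c0] continuous_on_reaction_drive) auto
    show "g x \<le> g y" if "feasible_extent {1..N} \<sigma> c0 x" "feasible_extent {1..N} \<sigma> c0 y" "x \<le> y" for x y
      using phiR_mono[OF c0 that] reaction_drive_mono[OF that] tau
      by (simp add: g_def d_def add_mono mult_left_mono)
    show "g x \<le> \<tau> * reaction_drive {1..N} \<sigma> U c0 x + (1 - \<tau>) * d 0"
      if "feasible_extent {1..N} \<sigma> c0 x" "x \<le> 0" for x
      using phiR_mono[OF c0 that(1) f0 that(2)] phiR_0[OF c0] by (simp add: g_def d_def algebra_simps)
    show "\<tau> * reaction_drive {1..N} \<sigma> U c0 x + (1 - \<tau>) * d 0 \<le> g x"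
      if "feasible_extent {1..N} \<sigma> c0 x" "0 \<le> x" for x
      using phiR_mono[OF c0 f0 that(1) that(2)] phiR_0[OF c0] by (simp add: g_def d_def algebra_simps)
  qed simp
  then show ?thesis by (simp add: corrector_iff[OF \<kappa>] g_def d_def)
qed

text \<open>
  Multiplying the corrector equation by \<open>R\<close> turns the secant slope into \<open>F(R) - F(0)\<close>; both other
  terms become \<open>\<le> 0\<close> since \<open>ln (R/\<kappa> + 1)\<close> and \<open>reaction_drive R - reaction_drive 0\<close> have the sign of \<open>R\<close>.
\<close>

lemma corrector_energy_decay:
  assumes c0: "\<forall>i\<in>{1..N}. c0 i > 0" and tau: "\<tau> > 0"
    and \<kappa>: "eta N r \<beta> k1m (cR r \<alpha> \<beta> c0 (Rh / 2)) * \<tau> = \<kappa>" "\<kappa> > 0"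
    and corr: "corrector N r \<alpha> \<beta> U k1m \<tau> c0 Rh R"
  shows "FR N r \<alpha> \<beta> U c0 R \<le> FR N r \<alpha> \<beta> U c0 0"
proof (cases "R = 0")
  case False
  define d where "d = reaction_drive {1..N} \<sigma> U c0"
  have f: "feasible_extent {1..N} \<sigma> c0 R" "- \<kappa> < R"
    and eq: "phiR N r \<alpha> \<beta> U c0 R 0 = - ln (R / \<kappa> + 1) - \<tau> * (d R - d 0)"
    using corr unfolding corrector_iff[OF \<kappa>] d_def by auto
  have "0 \<le> R * (d R - d 0)"
    using reaction_drive_mono[OF f(1) feasible_extent_0[OF c0]]
      reaction_drive_mono[OF feasible_extent_0[OF c0] f(1)]
    by (cases "R \<ge> 0") (auto simp: d_def mult_nonpos_nonpos)
  moreover have "FR N r \<alpha> \<beta> U c0 R - FR N r \<alpha> \<beta> U c0 0 = R * phiR N r \<alpha> \<beta> U c0 R 0"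
    using False by (simp add: phiR_def)
  moreover have "R * phiR N r \<alpha> \<beta> U c0 R 0 = - (R * ln (R / \<kappa> + 1)) - \<tau> * (R * (d R - d 0))"
    unfolding eq by (simp add: algebra_simps)
  ultimately show ?thesis
    using mult_ln_shift_nonneg[OF \<kappa>(2) f(2)] mult_nonneg_nonneg[of \<tau> "R * (d R - d 0)"] tau
    by linarith
qed simp

lemma reaction_step_exists:
  assumes c0: "\<forall>i\<in>{1..N}. c0 i > 0" and tau: "\<tau> > 0"
  shows "\<exists>c1. reaction_step N r \<alpha> \<beta> U k1m \<tau> c0 c1"
proof -
  obtain Rh where pred: "predictor N r \<alpha> \<beta> U k1m \<tau> c0 Rh"
    using predictor_unique_exists[OF c0 tau] by blast
  have "eta N r \<beta> k1m (cR r \<alpha> \<beta> c0 (Rh / 2)) * \<tau> > 0"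
    using eta_predictor_half_pos[OF c0 tau pred] tau by simp
  then obtain R where "corrector N r \<alpha> \<beta> U k1m \<tau> c0 Rh R"
    using corrector_unique_exists[OF c0 tau refl] by blast
  with pred show ?thesis
    unfolding reaction_step_def by (intro exI[of _ "\<lambda>i. c0 i + \<sigma> i * R"]) blast
qed

lemma reaction_step_energy_decay:
  assumes c0: "\<forall>i\<in>{1..N}. c0 i > 0" and tau: "\<tau> > 0"
    and step: "reaction_step N r \<alpha> \<beta> U k1m \<tau> c0 c1"
  shows "\<forall>i\<in>{1..N}. c1 i > 0"
    and "(\<Sum>i=1..N. Fi (U i) (c1 i)) \<le> (\<Sum>i=1..N. Fi (U i) (c0 i))"
proof -
  obtain Rh R where pred: "predictor N r \<alpha> \<beta> U k1m \<tau> c0 Rh"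
    and corr: "corrector N r \<alpha> \<beta> U k1m \<tau> c0 Rh R"
    and c1: "\<forall>i\<in>{1..N}. c1 i = c0 i + \<sigma> i * R"
    using step unfolding reaction_step_def by blast
  have \<kappa>: "eta N r \<beta> k1m (cR r \<alpha> \<beta> c0 (Rh / 2)) * \<tau> > 0"
    using eta_predictor_half_pos[OF c0 tau pred] tau by simp
  show "\<forall>i\<in>{1..N}. c1 i > 0"
    using corr c1 unfolding corrector_iff[OF refl \<kappa>] feasible_extent_def by simp
  have "(\<Sum>i=1..N. Fi (U i) (c1 i)) = FR N r \<alpha> \<beta> U c0 R"
    unfolding FR_eq using c1 by simp
  also have "\<dots> \<le> FR N r \<alpha> \<beta> U c0 0"
    by (rule corrector_energy_decay[OF c0 tau refl \<kappa> corr])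
  also have "\<dots> = (\<Sum>i=1..N. Fi (U i) (c0 i))"
    unfolding FR_eq by simp
  finally show "(\<Sum>i=1..N. Fi (U i) (c1 i)) \<le> (\<Sum>i=1..N. Fi (U i) (c0 i))" .
qed

lemma reaction_step_cong:
  assumes agree: "\<forall>i\<in>{1..N}. c0' i = c0 i"
  shows "reaction_step N r \<alpha> \<beta> U k1m \<tau> c0' = reaction_step N r \<alpha> \<beta> U k1m \<tau> c0"
proof -
  have cR: "i \<in> {1..N} \<Longrightarrow> cR r \<alpha> \<beta> c0' R i = cR r \<alpha> \<beta> c0 R i" for i R
    using agree by (simp add: cR_def)
  have eta: "eta N r \<beta> k1m c' = eta N r \<beta> k1m c" if "\<And>i. i \<in> {1..N} \<Longrightarrow> c' i = c i" for c c'
    unfolding eta_def using that r by (intro arg_cong[where f="(*) k1m"] prod.cong) auto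
  have FR: "FR N r \<alpha> \<beta> U c0' = FR N r \<alpha> \<beta> U c0"
    unfolding FR_eq using agree by (intro ext sum.cong) auto
  have "posR N r \<alpha> \<beta> c0' = posR N r \<alpha> \<beta> c0"
    "phiR N r \<alpha> \<beta> U c0' = phiR N r \<alpha> \<beta> U c0"
    "eta N r \<beta> k1m c0' = eta N r \<beta> k1m c0"
    "eta N r \<beta> k1m (cR r \<alpha> \<beta> c0' R) = eta N r \<beta> k1m (cR r \<alpha> \<beta> c0 R)" for R
    using agree cR by (auto simp: fun_eq_iff posR_def phiR_def FR intro!: eta)
  moreover have "i \<in> {1..N} \<Longrightarrow> muR r \<alpha> \<beta> U c0' R i = muR r \<alpha> \<beta> U c0 R i" for i R
    using cR by (simp add: muR_def)
  ultimately show ?thesis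
    using agree unfolding reaction_step_def predictor_def corrector_def Let_def fun_eq_iff
    by (simp cong: sum.cong_simp)
qed

lemma reaction_step_unique:
  assumes c0: "\<forall>i\<in>{1..N}. c0 i > 0" and tau: "\<tau> > 0" and agree: "\<forall>i\<in>{1..N}. c0' i = c0 i"
    and step: "reaction_step N r \<alpha> \<beta> U k1m \<tau> c0 c1" and step': "reaction_step N r \<alpha> \<beta> U k1m \<tau> c0' c1'"
  shows "\<forall>i\<in>{1..N}. c1 i = c1' i"
proof -
  obtain Rh R where pred: "predictor N r \<alpha> \<beta> U k1m \<tau> c0 Rh"
    and corr: "corrector N r \<alpha> \<beta> U k1m \<tau> c0 Rh R" and c1: "\<forall>i\<in>{1..N}. c1 i = c0 i + \<sigma> i * R"
    using step unfolding reaction_step_def by blast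
  obtain Rh' R' where pred': "predictor N r \<alpha> \<beta> U k1m \<tau> c0 Rh'"
    and corr': "corrector N r \<alpha> \<beta> U k1m \<tau> c0 Rh' R'" and c1': "\<forall>i\<in>{1..N}. c1' i = c0 i + \<sigma> i * R'"
    using step' unfolding reaction_step_cong[OF agree] reaction_step_def by blast
  have "Rh' = Rh" using predictor_unique_exists[OF c0 tau] pred pred' by blast
  moreover have "eta N r \<beta> k1m (cR r \<alpha> \<beta> c0 (Rh / 2)) * \<tau> > 0"
    using eta_predictor_half_pos[OF c0 tau pred] tau by simp
  ultimately have "R' = R"
    using corrector_unique_exists[OF c0 tau refl] corr corr' by blast
  with c1 c1' show ?thesis by simp
qed

end

section \<open>Splitting step\<close>

lemma energy_h_eq:
  "energy_h N N0 U c = (1 / real N0) ^ 3 * (\<Sum>p\<in>grid N0. \<Sum>i=1..N. Fi (U i) (c i p))"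
  unfolding energy_h_def Fi_def by (simp add: mult.commute)

lemma energy_h_mono_pointwise:
  assumes "\<And>p. p \<in> grid N0 \<Longrightarrow> (\<Sum>i=1..N. Fi (U i) (c' i p)) \<le> (\<Sum>i=1..N. Fi (U i) (c i p))"
  shows "energy_h N N0 U c' \<le> energy_h N N0 U c"
  unfolding energy_h_eq by (rule mult_left_mono[OF sum_mono[OF assms]]) (auto intro: zero_le_power)

lemma energy_h_mono_species:
  assumes "\<And>i. i \<in> {1..N} \<Longrightarrow> (\<Sum>p\<in>grid N0. Fi (U i) (c' i p)) \<le> (\<Sum>p\<in>grid N0. Fi (U i) (c i p))"
  shows "energy_h N N0 U c' \<le> energy_h N N0 U c"
proof -
  have "(\<Sum>i=1..N. \<Sum>p\<in>grid N0. Fi (U i) (c' i p)) \<le> (\<Sum>i=1..N. \<Sum>p\<in>grid N0. Fi (U i) (c i p))"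
    by (rule sum_mono[OF assms])
  then show ?thesis
    unfolding energy_h_eq by (subst (1 2) sum.swap) (intro mult_left_mono zero_le_power, simp_all)
qed

context
  fixes N r N0 :: nat and \<alpha> \<beta> U :: "nat \<Rightarrow> real" and k1m \<Delta>t :: real
    and D :: "nat \<Rightarrow> real \<Rightarrow> real"
  assumes r: "1 \<le> r" "r < N"
    and \<alpha>: "\<forall>i\<in>{1..r}. \<alpha> i > 0" and \<beta>: "\<forall>i\<in>{r+1..N}. \<beta> i > 0"
    and k1m: "k1m > 0" and dt: "\<Delta>t > 0" and N0: "N0 \<ge> 1"
    and D: "\<forall>i\<in>{1..N}. \<forall>\<rho>>0. D i \<rho> > 0"
begin

abbreviation reaction_stage :: "(nat \<Rightarrow> gpt \<Rightarrow> real) \<Rightarrow> (nat \<Rightarrow> gpt \<Rightarrow> real) \<Rightarrow> bool" where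
  "reaction_stage c c' \<equiv>
     \<forall>p\<in>grid N0. reaction_step N r \<alpha> \<beta> U k1m (\<Delta>t / 2) (\<lambda>i. c i p) (\<lambda>i. c' i p)"

abbreviation diffusion_stage :: "(nat \<Rightarrow> gpt \<Rightarrow> real) \<Rightarrow> (nat \<Rightarrow> gpt \<Rightarrow> real) \<Rightarrow> bool" where
  "diffusion_stage c c' \<equiv> \<forall>i\<in>{1..N}. diffusion_step N0 (D i) (U i) \<Delta>t (c i) (c' i)"

lemma splitting_step_iff:
  "splitting_step N r \<alpha> \<beta> U k1m D N0 \<Delta>t cn cn1 \<longleftrightarrow>
     supported N N0 cn1 \<and> (\<exists>c1 c2. reaction_stage cn c1 \<and> diffusion_stage c1 c2 \<and> reaction_stage c2 cn1)"
  by (simp add: splitting_step_def)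

lemma reaction_stage_decay:
  assumes pos: "positive_state N N0 c" and stage: "reaction_stage c c'"
  shows "positive_state N N0 c' \<and> energy_h N N0 U c' \<le> energy_h N N0 U c"
proof -
  have "(\<forall>i\<in>{1..N}. c' i p > 0) \<and> (\<Sum>i=1..N. Fi (U i) (c' i p)) \<le> (\<Sum>i=1..N. Fi (U i) (c i p))"
    if p: "p \<in> grid N0" for p
  proof -
    have cp: "\<forall>i\<in>{1..N}. c i p > 0" using pos p unfolding positive_state_def by blast
    have tau: "\<Delta>t / 2 > 0" using dt by simp
    have "reaction_step N r \<alpha> \<beta> U k1m (\<Delta>t / 2) (\<lambda>i. c i p) (\<lambda>i. c' i p)"
      using stage p by blast
    from reaction_step_energy_decay[OF r \<alpha> \<beta> k1m cp tau this] show ?thesis by simp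
  qed
  then show ?thesis
    unfolding positive_state_def by (auto intro: energy_h_mono_pointwise)
qed

lemma diffusion_stage_decay:
  assumes pos: "positive_state N N0 c" and stage: "diffusion_stage c c'"
  shows "positive_state N N0 c' \<and> energy_h N N0 U c' \<le> energy_h N N0 U c"
proof -
  have "(\<forall>p\<in>grid N0. c' i p > 0) \<and> (\<Sum>p\<in>grid N0. Fi (U i) (c' i p)) \<le> (\<Sum>p\<in>grid N0. Fi (U i) (c i p))"
    if i: "i \<in> {1..N}" for i
  proof -
    have cp: "\<forall>p\<in>grid N0. c i p > 0" using pos i unfolding positive_state_def by blast
    have Di: "\<forall>\<rho>>0. D i \<rho> > 0" using D i by blast
    have "diffusion_step N0 (D i) (U i) \<Delta>t (c i) (c' i)" using stage i by blast
    from diffusion_step_energy_decay[OF N0 dt Di cp this] show ?thesis by simp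
  qed
  then show ?thesis
    unfolding positive_state_def by (auto intro: energy_h_mono_species)
qed

lemma splitting_step_decay:
  assumes "positive_state N N0 cn" and "splitting_step N r \<alpha> \<beta> U k1m D N0 \<Delta>t cn cn1"
  shows "positive_state N N0 cn1 \<and> energy_h N N0 U cn1 \<le> energy_h N N0 U cn"
proof -
  obtain c1 c2 where st1: "reaction_stage cn c1" and st2: "diffusion_stage c1 c2"
    and st3: "reaction_stage c2 cn1"
    using assms(2) unfolding splitting_step_iff by blast
  have 1: "positive_state N N0 c1 \<and> energy_h N N0 U c1 \<le> energy_h N N0 U cn"
    by (rule reaction_stage_decay[OF assms(1) st1])
  have 2: "positive_state N N0 c2 \<and> energy_h N N0 U c2 \<le> energy_h N N0 U c1"
    by (rule diffusion_stage_decay[OF conjunct1[OF 1] st2])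
  have 3: "positive_state N N0 cn1 \<and> energy_h N N0 U cn1 \<le> energy_h N N0 U c2"
    by (rule reaction_stage_decay[OF conjunct1[OF 2] st3])
  from 1 2 3 show ?thesis by linarith
qed

lemma splitting_step_exists:
  assumes pos: "positive_state N N0 cn"
  shows "\<exists>cn1. splitting_step N r \<alpha> \<beta> U k1m D N0 \<Delta>t cn cn1"
proof -
  have tau: "\<Delta>t / 2 > 0" using dt by simp
  have reaction_exists: "\<exists>f. reaction_step N r \<alpha> \<beta> U k1m (\<Delta>t / 2) (\<lambda>i. c i p) f"
    if "positive_state N N0 c" "p \<in> grid N0" for c p
  proof -
    have "\<forall>i\<in>{1..N}. c i p > 0" using that unfolding positive_state_def by blast
    from reaction_step_exists[OF r \<alpha> \<beta> k1m this tau] show ?thesis .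
  qed
  define c1 where "c1 i p = (SOME f. reaction_step N r \<alpha> \<beta> U k1m (\<Delta>t / 2) (\<lambda>i. cn i p) f) i" for i p
  have stage1: "reaction_stage cn c1"
    unfolding c1_def using someI_ex[OF reaction_exists[OF pos]] by simp
  have pos1: "positive_state N N0 c1" using reaction_stage_decay[OF pos stage1] by blast
  define c2 where "c2 i = (SOME \<rho>. diffusion_step N0 (D i) (U i) \<Delta>t (c1 i) \<rho>)" for i
  have stage2: "diffusion_stage c1 c2"
  proof
    fix i assume "i \<in> {1..N}"
    with pos1 D have "\<exists>\<rho>. diffusion_step N0 (D i) (U i) \<Delta>t (c1 i) \<rho>"
      by (intro diffusion_step_exists[OF N0 dt]) (auto simp: positive_state_def)
    then show "diffusion_step N0 (D i) (U i) \<Delta>t (c1 i) (c2 i)"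
      unfolding c2_def by (rule someI_ex)
  qed
  have pos2: "positive_state N N0 c2" using diffusion_stage_decay[OF pos1 stage2] by blast
  define c3 where "c3 p = (SOME f. reaction_step N r \<alpha> \<beta> U k1m (\<Delta>t / 2) (\<lambda>i. c2 i p) f)" for p
  define cn1 where "cn1 i p = (if i \<in> {1..N} \<and> p \<in> grid N0 then c3 p i else 0)" for i p
  have "reaction_step N r \<alpha> \<beta> U k1m (\<Delta>t / 2) (\<lambda>i. c2 i p) (\<lambda>i. cn1 i p)" if "p \<in> grid N0" for p
    using someI_ex[OF reaction_exists[OF pos2 that]] that
    unfolding c3_def cn1_def reaction_step_def by auto
  then have "reaction_stage c2 cn1" by blast
  moreover have "supported N N0 cn1" by (auto simp: supported_def cn1_def)
  ultimately show ?thesis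
    unfolding splitting_step_iff using stage1 stage2 by blast
qed

lemma splitting_step_unique:
  assumes pos: "positive_state N N0 cn"
    and step: "splitting_step N r \<alpha> \<beta> U k1m D N0 \<Delta>t cn a"
    and step': "splitting_step N r \<alpha> \<beta> U k1m D N0 \<Delta>t cn b"
  shows "a = b"
proof -
  have tau: "\<Delta>t / 2 > 0" using dt by simp
  obtain a1 a2 where a1: "reaction_stage cn a1" and a2: "diffusion_stage a1 a2"
    and a: "reaction_stage a2 a" and "supported N N0 a"
    using step unfolding splitting_step_iff by blast
  obtain b1 b2 where b1: "reaction_stage cn b1" and b2: "diffusion_stage b1 b2"
    and b: "reaction_stage b2 b" and "supported N N0 b"
    using step' unfolding splitting_step_iff by blast
  have pos1: "positive_state N N0 a1" using reaction_stage_decay[OF pos a1] by blast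
  have pos2: "positive_state N N0 a2" using diffusion_stage_decay[OF pos1 a2] by blast
  have same1: "\<forall>i\<in>{1..N}. a1 i p = b1 i p" if p: "p \<in> grid N0" for p
  proof -
    have cp: "\<forall>i\<in>{1..N}. cn i p > 0" using pos p unfolding positive_state_def by blast
    have "reaction_step N r \<alpha> \<beta> U k1m (\<Delta>t / 2) (\<lambda>i. cn i p) (\<lambda>i. a1 i p)"
      "reaction_step N r \<alpha> \<beta> U k1m (\<Delta>t / 2) (\<lambda>i. cn i p) (\<lambda>i. b1 i p)"
      using a1 b1 p by blast+
    from reaction_step_unique[OF r \<alpha> \<beta> k1m cp tau _ this] show ?thesis by simp
  qed
  have same2: "\<forall>p\<in>grid N0. a2 i p = b2 i p" if i: "i \<in> {1..N}" for i
  proof -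
    have facts: "\<forall>\<rho>>0. D i \<rho> > 0" "\<forall>p\<in>grid N0. a1 i p > 0" "\<forall>p\<in>grid N0. b1 i p = a1 i p"
      using pos1 D same1 i unfolding positive_state_def by auto
    have "diffusion_step N0 (D i) (U i) \<Delta>t (a1 i) (a2 i)" "diffusion_step N0 (D i) (U i) \<Delta>t (b1 i) (b2 i)"
      using a2 b2 i by blast+
    from diffusion_step_unique[OF dt facts this] show ?thesis .
  qed
  have "\<forall>i\<in>{1..N}. a i p = b i p" if p: "p \<in> grid N0" for p
  proof -
    have cp: "\<forall>i\<in>{1..N}. a2 i p > 0" and agree: "\<forall>i\<in>{1..N}. b2 i p = a2 i p"
      using pos2 same2 p unfolding positive_state_def by auto
    have "reaction_step N r \<alpha> \<beta> U k1m (\<Delta>t / 2) (\<lambda>i. a2 i p) (\<lambda>i. a i p)"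
      "reaction_step N r \<alpha> \<beta> U k1m (\<Delta>t / 2) (\<lambda>i. b2 i p) (\<lambda>i. b i p)"
      using a b p by blast+
    from reaction_step_unique[OF r \<alpha> \<beta> k1m cp tau _ this] agree show ?thesis by simp
  qed
  with \<open>supported N N0 a\<close> \<open>supported N N0 b\<close> show "a = b"
    unfolding supported_def by (metis ext)
qed

end

theorem theorem3p7:
  fixes N r N0 :: nat and \<alpha> \<beta> U :: "nat \<Rightarrow> real" and k1m \<Delta>t :: real
    and D :: "nat \<Rightarrow> real \<Rightarrow> real"
  assumes "1 \<le> r" and "r < N"
    and "\<forall>i\<in>{1..r}. \<alpha> i > 0" and "\<forall>i\<in>{r+1..N}. \<beta> i > 0"
    and "k1m > 0" and "\<Delta>t > 0" and "N0 \<ge> 1"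
    and "\<forall>i\<in>{1..N}. \<forall>\<rho>>0. D i \<rho> > 0"
  shows "(\<forall>cn. positive_state N N0 cn \<longrightarrow>
            (\<exists>!cn1. splitting_step N r \<alpha> \<beta> U k1m D N0 \<Delta>t cn cn1) \<and>
            (\<forall>cn1. splitting_step N r \<alpha> \<beta> U k1m D N0 \<Delta>t cn cn1 \<longrightarrow>
                positive_state N N0 cn1 \<and> energy_h N N0 U cn1 \<le> energy_h N N0 U cn)) \<and>
         (\<forall>c :: nat \<Rightarrow> nat \<Rightarrow> gpt \<Rightarrow> real.
            positive_state N N0 (c 0) \<and>
            (\<forall>n. splitting_step N r \<alpha> \<beta> U k1m D N0 \<Delta>t (c n) (c (Suc n))) \<longrightarrow>
            (\<forall>n. energy_h N N0 U (c n) \<le> energy_h N N0 U (c 0)))"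
proof -
  have step: "(\<exists>!cn1. splitting_step N r \<alpha> \<beta> U k1m D N0 \<Delta>t cn cn1) \<and>
      (\<forall>cn1. splitting_step N r \<alpha> \<beta> U k1m D N0 \<Delta>t cn cn1 \<longrightarrow>
        positive_state N N0 cn1 \<and> energy_h N N0 U cn1 \<le> energy_h N N0 U cn)"
    if "positive_state N N0 cn" for cn
    using splitting_step_exists[OF assms that] splitting_step_unique[OF assms that]
      splitting_step_decay[OF assms that] by blast
  have "positive_state N N0 (c n) \<and> energy_h N N0 U (c n) \<le> energy_h N N0 U (c 0)"
    if "positive_state N N0 (c 0)" "\<forall>n. splitting_step N r \<alpha> \<beta> U k1m D N0 \<Delta>t (c n) (c (Suc n))"
    for c :: "nat \<Rightarrow> nat \<Rightarrow> gpt \<Rightarrow> real" and n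
  proof (induction n)
    case (Suc n)
    with step[of "c n"] that(2) show ?case by fastforce
  qed (use that in simp)
  with step show ?thesis by blast
qed

end
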